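(* Let $p\in\{0\}\cup[1,\infty)$ and let $A$ be a nonempty subset of $L^p(E)$. Then $A$ is $p$-Choquet decomposable if and only if $A$ is decomposable and strongly closed, i.e. $A=\operatorname{cl}_p A$.
   Context: $E$ is a separable Banach space with Borel $\sigma$-algebra $\mathcal B(E)$ and dual $E^*$; $(\Omega,\mathcal F,\mathbb P)$ is a complete probability space. $L^0(E)$ is the set of a.s.-classes of $E$-valued random variables, $L^p(E)=\{\xi\in L^0(E):\mathbb E|\xi|^p<\infty\}$ for $p\ge1$. $\operatorname{cl}_p$ denotes closure in the norm topology of $L^p(E)$ for $p\geq 1$ and in the topology of convergence in probability for $p=0$ ("strong closure"). $A$ is decomposable if $1_B\xi+1_{B^c}\zeta\in A$ for all $\xi,\zeta\in A$, $B\in\mathcal F$; $\operatorname{dec}A$ is the smallest decomposable set containing $A$ (all finite decompositions $\sum_{i=1}^m 1_{B_i}\xi_i$, $\xi_i\in A$, $(B_i)$ a measurable partition). A closed random set is a closed-valued multifunction $X:\Omega\to\mathcal P(E)$ that is Effros measurable ($\{\omega: X(\omega)\cap U\neq\emptyset\}\in\mathcal F$ for open $U$); $L^p(X)$ is the set of $\xi\in L^p(E)$ with $\xi(\omega)\in X(\omega)$ a.s. For nonempty $A\subseteq L^p(E)$, $F_A$ denotes the a.s. unique closed random set with $\operatorname{cl}_p\operatorname{dec}A=L^p(F_A)$. A transition probability kernel $K$ from $(\Omega,\mathcal F)$ to $(E,\mathcal B(E))$ has a barycenter in $L^p(E)$ if there is $Y\in L^p(E)$ with $L\circ Y=\int_E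 L(x)\,K(\cdot,dx)$ a.s. for every $L\in E^*$; $Y$ is denoted $r(K)=\int_E x\,K(dx)$. $\mathcal K_p(A)$ is the set of regular Borel transition probability kernels $K$ with $K(\omega,F_A(\omega))=1$ for a.e. $\omega$ that have a barycenter in $L^p(E)$; $\mathcal K^\delta_p(A)$ is the set of $K\in\mathcal K_p(A)$ such that $K(\omega)$ is a Dirac measure for a.e. $\omega$. $A\subseteq L^p(E)$ is $p$-Choquet decomposable if $r(K)\in A$ for every $K\in\mathcal K^\delta_p(A)$. *)

theory Defs
  imports "HOL-Probability.Probability"
begin

text \<open>Random variables are represented by functions; a set of a.s.-classes is
represented by a set of functions, and all membership / equality tests between
classes are made modulo a.s. equality.\<close>

definition ae_eq :: "'w measure \<Rightarrow> ('w \<Rightarrow> 'e) \<Rightarrow> ('w \<Rightarrow> 'e) \<Rightarrow> bool" where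
  "ae_eq M f g \<longleftrightarrow> (AE \<omega> in M. f \<omega> = g \<omega>)"

definition ae_mem :: "'w measure \<Rightarrow> ('w \<Rightarrow> 'e) \<Rightarrow> ('w \<Rightarrow> 'e) set \<Rightarrow> bool" where
  "ae_mem M f A \<longleftrightarrow> (\<exists>g\<in>A. ae_eq M f g)"

definition Lp :: "'w measure \<Rightarrow> real \<Rightarrow> ('w \<Rightarrow> 'e::{banach,second_countable_topology}) set" where
  "Lp M p = {\<xi>. \<xi> \<in> borel_measurable M \<and>
      (p = 0 \<or> integrable M (\<lambda>\<omega>. norm (\<xi> \<omega>) powr p))}"

definition conv_p :: "'w measure \<Rightarrow> real \<Rightarrow> (nat \<Rightarrow> 'w \<Rightarrow> 'e::{banach,second_countable_topology})
    \<Rightarrow> ('w \<Rightarrow> 'e) \<Rightarrow> bool" where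
  "conv_p M p X \<xi> \<longleftrightarrow>
    (if p = 0 then (\<forall>\<epsilon>>0. (\<lambda>n. measure M {\<omega>\<in>space M. norm (X n \<omega> - \<xi> \<omega>) > \<epsilon>}) \<longlonglongrightarrow> 0)
     else (\<lambda>n. integral\<^sup>L M (\<lambda>\<omega>. norm (X n \<omega> - \<xi> \<omega>) powr p)) \<longlonglongrightarrow> 0)"

text \<open>strong closure cl_p (both topologies are metrizable, so the closure is the
sequential closure)\<close>
definition clp :: "'w measure \<Rightarrow> real \<Rightarrow> ('w \<Rightarrow> 'e::{banach,second_countable_topology}) set
    \<Rightarrow> ('w \<Rightarrow> 'e) set" where
  "clp M p A = {\<xi>\<in>Lp M p. \<exists>X. (\<forall>n. X n \<in> A) \<and> conv_p M p X \<xi>}"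

definition decomposable :: "'w measure \<Rightarrow> ('w \<Rightarrow> 'e::real_vector) set \<Rightarrow> bool" where
  "decomposable M A \<longleftrightarrow> (\<forall>\<xi>\<in>A. \<forall>\<zeta>\<in>A. \<forall>B\<in>sets M.
      ae_mem M (\<lambda>\<omega>. indicator B \<omega> *\<^sub>R \<xi> \<omega> + indicator (space M - B) \<omega> *\<^sub>R \<zeta> \<omega>) A)"

definition dec :: "'w measure \<Rightarrow> ('w \<Rightarrow> 'e::real_vector) set \<Rightarrow> ('w \<Rightarrow> 'e) set" where
  "dec M A = {\<eta>. \<exists>(m::nat) (\<xi>::nat \<Rightarrow> 'w \<Rightarrow> 'e) (B::nat \<Rightarrow> 'w set).
      (\<forall>i<m. \<xi> i \<in> A \<and> B i \<in> sets M) \<and> disjoint_family_on B {..<m} \<and>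
      (\<Union>i<m. B i) = space M \<and>
      \<eta> = (\<lambda>\<omega>. \<Sum>i<m. indicator (B i) \<omega> *\<^sub>R \<xi> i \<omega>)}"

definition closed_random_set :: "'w measure \<Rightarrow> ('w \<Rightarrow> 'e::topological_space set) \<Rightarrow> bool" where
  "closed_random_set M X \<longleftrightarrow> (\<forall>\<omega>\<in>space M. closed (X \<omega>)) \<and>
      (\<forall>U. open U \<longrightarrow> {\<omega>\<in>space M. X \<omega> \<inter> U \<noteq> {}} \<in> sets M)"

definition Lp_sel :: "'w measure \<Rightarrow> real \<Rightarrow> ('w \<Rightarrow> 'e::{banach,second_countable_topology} set)
    \<Rightarrow> ('w \<Rightarrow> 'e) set" where
  "Lp_sel M p X = {\<xi>\<in>Lp M p. AE \<omega> in M. \<xi> \<omega> \<in> X \<omega>}"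

definition barycenter :: "'w measure \<Rightarrow> real \<Rightarrow> ('w \<Rightarrow> 'e::{banach,second_countable_topology} measure)
    \<Rightarrow> ('w \<Rightarrow> 'e) \<Rightarrow> bool" where
  "barycenter M p K Y \<longleftrightarrow> Y \<in> Lp M p \<and>
     (\<forall>L::'e \<Rightarrow> real. bounded_linear L \<longrightarrow>
        (AE \<omega> in M. integrable (K \<omega>) L \<and> L (Y \<omega>) = integral\<^sup>L (K \<omega>) L))"

definition Kdelta :: "'w measure \<Rightarrow> real \<Rightarrow> ('w \<Rightarrow> 'e::{banach,second_countable_topology} set)
    \<Rightarrow> ('w \<Rightarrow> 'e measure) set" where
  "Kdelta M p F = {K. K \<in> M \<rightarrow>\<^sub>M prob_algebra borel \<and>
      (AE \<omega> in M. emeasure (K \<omega>) (F \<omega>) = 1) \<and>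
      (\<exists>Y. barycenter M p K Y) \<and>
      (AE \<omega> in M. \<exists>x. K \<omega> = return borel x)}"

text \<open>F_A is the a.s. unique closed random set with cl_p dec A = L^p(F_A); since it is
a.s. unique, we quantify over all such F.\<close>
definition is_FA :: "'w measure \<Rightarrow> real \<Rightarrow> ('w \<Rightarrow> 'e::{banach,second_countable_topology}) set
    \<Rightarrow> ('w \<Rightarrow> 'e set) \<Rightarrow> bool" where
  "is_FA M p A F \<longleftrightarrow> closed_random_set M F \<and> clp M p (dec M A) = Lp_sel M p F"

definition choquet_decomposable :: "'w measure \<Rightarrow> real
    \<Rightarrow> ('w \<Rightarrow> 'e::{banach,second_countable_topology}) set \<Rightarrow> bool" where
  "choquet_decomposable M p A \<longleftrightarrow>
     (\<forall>F. is_FA M p A F \<longrightarrow> (\<forall>K\<in>Kdelta M p F. \<forall>Y. barycenter M p K Y \<longrightarrow> ae_mem M Y A))"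

definition strongly_closed :: "'w measure \<Rightarrow> real
    \<Rightarrow> ('w \<Rightarrow> 'e::{banach,second_countable_topology}) set \<Rightarrow> bool" where
  "strongly_closed M p A \<longleftrightarrow> (\<forall>\<xi>\<in>A. ae_mem M \<xi> (clp M p A)) \<and> (\<forall>\<xi>\<in>clp M p A. ae_mem M \<xi> A)"

end

theory Submission
  imports Defs
begin

text \<open>Both sides of the equivalence say that cl_p dec A is contained in A up to a.s.
  equality. For decomposability and closedness this is direct, since cl_p dec A is
  decomposable, closed and contains A. For Choquet decomposability one identifies F_A:
  following Hiai and Umegaki, a closed decomposable D \<subseteq> L^p equals L^p(F) where F is the
  pointwise closure of countably many elements of D, namely of minimizing sequences for
  E min(1, |\<xi> - e_k|) with (e_k) dense in E. A Dirac kernel concentrated on F has its atom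
  as barycenter, because countably many norming functionals (Hahn--Banach) separate the
  points of E; so the barycenters of K^\<delta>_p(A) are exactly the elements of
  L^p(F_A) = cl_p dec A.\<close>

lemma powr_le_two_powr_add:
  fixes a b c p :: real
  assumes "0 \<le> c" "c \<le> a + b" "a \<ge> 0" "b \<ge> 0" "p \<ge> 0"
  shows "c powr p \<le> 2 powr p * (a powr p + b powr p)"
proof -
  have "c powr p \<le> (2 * max a b) powr p"
    using assms by (intro powr_mono2) auto
  also have "\<dots> = 2 powr p * max a b powr p"
    using assms by (simp add: powr_mult)
  also have "\<dots> \<le> 2 powr p * (a powr p + b powr p)"
    by (intro mult_left_mono) (auto simp: max_def)
  finally show ?thesis .
qed

lemma sum_indicator_disjoint_family:
  fixes f :: "'i \<Rightarrow> 'e::real_vector"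
  assumes "finite I" "disjoint_family_on B I" "i \<in> I" "x \<in> B i"
  shows "(\<Sum>j\<in>I. indicator (B j) x *\<^sub>R f j) = f i"
proof -
  have "(\<Sum>j\<in>I. indicator (B j) x *\<^sub>R f j) = (\<Sum>j\<in>{i}. indicator (B j) x *\<^sub>R f j)"
    using assms by (intro sum.mono_neutral_right) (auto simp: disjoint_family_on_def indicator_def)
  then show ?thesis using assms by simp
qed

lemma disjoint_family_on_glue:
  fixes m m' :: nat
  assumes "disjoint_family_on B {..<m}" "disjoint_family_on B' {..<m'}"
  shows "disjoint_family_on (\<lambda>i. if i < m then C \<inter> B i else (\<Omega> - C) \<inter> B' (i - m)) {..<m + m'}"
  unfolding disjoint_family_on_def
proof (intro ballI impI)
  fix i j assume ij: "i \<in> {..<m + m'}" "j \<in> {..<m + m'}" "i \<noteq> j"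
  show "(if i < m then C \<inter> B i else (\<Omega> - C) \<inter> B' (i - m)) \<inter>
      (if j < m then C \<inter> B j else (\<Omega> - C) \<inter> B' (j - m)) = {}"
  proof (cases "i < m"; cases "j < m")
    assume "i < m" "j < m"
    then show ?thesis using assms(1) ij by (auto simp: disjoint_family_on_def)
  next
    assume "\<not> i < m" "\<not> j < m"
    then have "i - m \<noteq> j - m" "i - m < m'" "j - m < m'" using ij by auto
    then show ?thesis using \<open>\<not> i < m\<close> \<open>\<not> j < m\<close> assms(2) by (auto simp: disjoint_family_on_def)
  qed auto
qed

lemma UN_glue:
  fixes m m' :: nat
  assumes "(\<Union>i<m. B i) = \<Omega>" "(\<Union>i<m'. B' i) = \<Omega>"
  shows "(\<Union>i<m + m'. if i < m then C \<inter> B i else (\<Omega> - C) \<inter> B' (i - m)) = \<Omega>"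
proof
  show "(\<Union>i<m + m'. if i < m then C \<inter> B i else (\<Omega> - C) \<inter> B' (i - m)) \<subseteq> \<Omega>"
    using assms by (auto split: if_splits)
  show "\<Omega> \<subseteq> (\<Union>i<m + m'. if i < m then C \<inter> B i else (\<Omega> - C) \<inter> B' (i - m))"
  proof
    fix \<omega> assume \<omega>: "\<omega> \<in> \<Omega>"
    show "\<omega> \<in> (\<Union>i<m + m'. if i < m then C \<inter> B i else (\<Omega> - C) \<inter> B' (i - m))"
    proof (cases "\<omega> \<in> C")
      case True
      then obtain i where "i < m" "\<omega> \<in> B i" using assms(1) \<omega> by blast
      then show ?thesis using True by (auto intro!: bexI[of _ i])
    next
      case False
      then obtain i where "i < m'" "\<omega> \<in> B' i" using assms(2) \<omega> by blast
      then show ?thesis using False \<omega> by (auto intro!: bexI[of _ "m + i"])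
    qed
  qed
qed

lemma ex_dense_sequence:
  "\<exists>e::nat \<Rightarrow> 'a::{metric_space,second_countable_topology}. \<forall>x r. r > 0 \<longrightarrow> (\<exists>k. dist x (e k) < r)"
proof -
  obtain D :: "'a set" where "countable D" and D: "\<And>U. open U \<Longrightarrow> U \<noteq> {} \<Longrightarrow> \<exists>d\<in>D. d \<in> U"
    by (erule countable_dense_setE)
  have "\<exists>k. dist x (from_nat_into D k) < r" if "r > 0" for x r
  proof -
    obtain d where "d \<in> D" "d \<in> ball x r" using D[of "ball x r"] \<open>r > 0\<close> by auto
    with \<open>countable D\<close> show ?thesis by (metis from_nat_into_surj mem_ball)
  qed
  then show ?thesis by blast
qed

lemma closure_by_dense_sequence:
  fixes e :: "nat \<Rightarrow> 'a::metric_space"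
  assumes e: "\<forall>x r. r > 0 \<longrightarrow> (\<exists>k. dist x (e k) < r)"
    and approx: "\<forall>k j. \<exists>y\<in>S. min 1 (dist y (e k)) < min 1 (dist v (e k)) + 1 / (real j + 1)"
  shows "v \<in> closure S"
  unfolding closure_approachable
proof (intro allI impI)
  fix r :: real assume "r > 0"
  define s where "s = min (r/3) (1/3)"
  have s: "s > 0" "s \<le> r/3" "s \<le> 1/3" using \<open>r > 0\<close> by (auto simp: s_def)
  obtain k where k: "dist v (e k) < s" using e s by blast
  obtain j :: nat where "1 / real (Suc j) < s" using nat_approx_posE[OF s(1)] .
  then have j: "1 / (real j + 1) < s" by (simp add: add.commute)
  obtain y where "y \<in> S" and y: "min 1 (dist y (e k)) < min 1 (dist v (e k)) + 1 / (real j + 1)"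
    using approx by blast
  then have "min 1 (dist y (e k)) < 2 * s" using k j by linarith
  then have "dist y (e k) < 2 * s" using s by (simp add: min_def split: if_splits)
  then have "dist y v < r" using dist_triangle2[of y v "e k"] k s by linarith
  with \<open>y \<in> S\<close> show "\<exists>y\<in>S. dist y v < r" by blast
qed

lemma tendsto_zero_iff_eventually_le:
  fixes f :: "nat \<Rightarrow> real"
  assumes "\<And>n. f n \<ge> 0"
  shows "f \<longlonglongrightarrow> 0 \<longleftrightarrow> (\<forall>\<delta>>0. eventually (\<lambda>n. f n \<le> \<delta>) sequentially)"
proof
  show "\<forall>\<delta>>0. eventually (\<lambda>n. f n \<le> \<delta>) sequentially" if "f \<longlonglongrightarrow> 0"
  proof (intro allI impI)
    fix \<delta> :: real assume "\<delta> > 0"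
    show "eventually (\<lambda>n. f n \<le> \<delta>) sequentially"
      using order_tendstoD(2)[OF that \<open>\<delta> > 0\<close>] by (rule eventually_mono) simp
  qed
next
  assume le: "\<forall>\<delta>>0. eventually (\<lambda>n. f n \<le> \<delta>) sequentially"
  show "f \<longlonglongrightarrow> 0"
  proof (rule order_tendstoI)
    show "eventually (\<lambda>n. f n < u) sequentially" if "0 < u" for u
      using le[rule_format, of "u/2"] that by (auto elim: eventually_mono)
    show "eventually (\<lambda>n. l < f n) sequentially" if "l < 0" for l
      using assms that by (intro always_eventually allI) (meson less_le_trans)
  qed
qed

lemma ex_minimizing_sequence:
  fixes f :: "'a \<Rightarrow> real"
  assumes S: "S \<noteq> {}" and bdd: "bdd_below (f ` S)"
  shows "\<exists>x. (\<forall>n. x n \<in> S) \<and> (\<lambda>n. f (x n)) \<longlonglongrightarrow> Inf (f ` S)"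
proof -
  have "\<exists>x\<in>S. f x < Inf (f ` S) + 1 / (real n + 1)" for n
    using cInf_lessD[of "f ` S" "Inf (f ` S) + 1 / (real n + 1)"] S by auto
  then obtain x where x: "\<And>n. x n \<in> S" "\<And>n. f (x n) < Inf (f ` S) + 1 / (real n + 1)" by metis
  have "(\<lambda>n. f (x n)) \<longlonglongrightarrow> Inf (f ` S)"
  proof (rule tendsto_sandwich[OF _ _ tendsto_const])
    show "eventually (\<lambda>n. Inf (f ` S) \<le> f (x n)) sequentially"
      using x(1) bdd by (intro always_eventually allI cInf_lower) auto
    show "eventually (\<lambda>n. f (x n) \<le> Inf (f ` S) + 1 / (real n + 1)) sequentially"
      using x(2) by (intro always_eventually allI less_imp_le)
    show "(\<lambda>n. Inf (f ` S) + 1 / (real n + 1)) \<longlonglongrightarrow> Inf (f ` S)"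
      using LIMSEQ_inverse_real_of_nat_add[of "Inf (f ` S)"] by (simp add: inverse_eq_divide add.commute)
  qed
  then show ?thesis using x(1) by blast
qed

lemma closed_random_set_closure_range:
  fixes \<phi> :: "nat \<Rightarrow> 'w \<Rightarrow> 'e::{banach,second_countable_topology}"
  assumes \<phi>: "\<And>j. \<phi> j \<in> borel_measurable M"
  shows "closed_random_set M (\<lambda>\<omega>. closure (range (\<lambda>j. \<phi> j \<omega>)))"
  unfolding closed_random_set_def
proof (intro conjI allI impI ballI closed_closure)
  fix U :: "'e set" assume U: "open U"
  have "closure (range (\<lambda>j. \<phi> j \<omega>)) \<inter> U \<noteq> {} \<longleftrightarrow> (\<exists>j. \<phi> j \<omega> \<in> U)" for \<omega>
    using open_Int_closure_eq_empty[OF U, of "range (\<lambda>j. \<phi> j \<omega>)"] by (auto simp: Int_commute)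
  then have "{\<omega>\<in>space M. closure (range (\<lambda>j. \<phi> j \<omega>)) \<inter> U \<noteq> {}} = (\<Union>j. \<phi> j -` U \<inter> space M)"
    by auto
  also have "\<dots> \<in> sets M" using measurable_sets[OF \<phi> borel_open[OF U]] by (intro sets.countable_UN) auto
  finally show "{\<omega>\<in>space M. closure (range (\<lambda>j. \<phi> j \<omega>)) \<inter> U \<noteq> {}} \<in> sets M" .
qed

section \<open>Separating points by functionals\<close>

text \<open>Hahn--Banach for the norm: a maximal graph of a norm-dominated linear functional
  through (d, norm d) is total.\<close>

definition dominated_graph :: "'e::real_normed_vector \<Rightarrow> ('e \<times> real) set \<Rightarrow> bool" where
  "dominated_graph d G \<longleftrightarrow>
     (\<forall>x a y b. (x, a) \<in> G \<longrightarrow> (y, b) \<in> G \<longrightarrow> (x + y, a + b) \<in> G) \<and>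
     (\<forall>x a c. (x, a) \<in> G \<longrightarrow> (c *\<^sub>R x, c * a) \<in> G) \<and>
     (\<forall>x a. (x, a) \<in> G \<longrightarrow> a \<le> norm x) \<and> (d, norm d) \<in> G"

lemma dominated_graph_add: "dominated_graph d G \<Longrightarrow> (x, a) \<in> G \<Longrightarrow> (y, b) \<in> G \<Longrightarrow> (x + y, a + b) \<in> G"
  and dominated_graph_scaleR: "dominated_graph d G \<Longrightarrow> (x, a) \<in> G \<Longrightarrow> (c *\<^sub>R x, c * a) \<in> G"
  and dominated_graph_le_norm: "dominated_graph d G \<Longrightarrow> (x, a) \<in> G \<Longrightarrow> a \<le> norm x"
  and dominated_graph_point: "dominated_graph d G \<Longrightarrow> (d, norm d) \<in> G"
  unfolding dominated_graph_def by blast+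

lemma dominated_graph_unique:
  assumes G: "dominated_graph d G" and "(x, a) \<in> G" "(x, b) \<in> G"
  shows "a = b"
proof -
  have "(x + (-1) *\<^sub>R x, a + (-1) * b) \<in> G" "(x + (-1) *\<^sub>R x, b + (-1) * a) \<in> G"
    using assms dominated_graph_add dominated_graph_scaleR by blast+
  then have "a + (-1) * b \<le> norm (x + (-1) *\<^sub>R x)" "b + (-1) * a \<le> norm (x + (-1) *\<^sub>R x)"
    using dominated_graph_le_norm[OF G] by blast+
  then show ?thesis by simp
qed

lemma dominated_graph_line: "dominated_graph d {(t *\<^sub>R d, t * norm d) | t. True}"
  unfolding dominated_graph_def
proof (intro conjI allI impI)
  show "(x + y, a + b) \<in> {(t *\<^sub>R d, t * norm d) | t. True}"
    if "(x, a) \<in> {(t *\<^sub>R d, t * norm d) | t. True}" "(y, b) \<in> {(t *\<^sub>R d, t * norm d) | t. True}"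
    for x a y b
    using that by clarsimp (metis scaleR_left_distrib distrib_right)
  show "(c *\<^sub>R x, c * a) \<in> {(t *\<^sub>R d, t * norm d) | t. True}"
    if "(x, a) \<in> {(t *\<^sub>R d, t * norm d) | t. True}" for x a c
    using that by clarsimp metis
  show "a \<le> norm x" if "(x, a) \<in> {(t *\<^sub>R d, t * norm d) | t. True}" for x a
    using that by (clarsimp simp: mult_right_mono)
  show "(d, norm d) \<in> {(t *\<^sub>R d, t * norm d) | t. True}"
    by (rule CollectI, rule exI[of _ 1]) simp
qed

lemma dominated_graph_extension:
  fixes z :: "'e::real_normed_vector"
  assumes G: "dominated_graph d G"
    and c_lower: "\<And>x a. (x, a) \<in> G \<Longrightarrow> a - norm (x - z) \<le> c"
    and c_upper: "\<And>y b. (y, b) \<in> G \<Longrightarrow> c \<le> norm (y + z) - b"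
  shows "dominated_graph d {(x + t *\<^sub>R z, a + t * c) | x a t. (x, a) \<in> G}"
    (is "dominated_graph d ?G'")
proof -
  have memG': "(x + t *\<^sub>R z, a + t * c) \<in> ?G'" if "(x, a) \<in> G" for x a t
    using that by blast
  have le_norm: "a + t * c \<le> norm (x + t *\<^sub>R z)" if xa: "(x, a) \<in> G" for x a t
  proof (cases t "0::real" rule: linorder_cases)
    case less
    have "(-1/t) *\<^sub>R x - z = (-1/t) *\<^sub>R (x + t *\<^sub>R z)" using less by (simp add: algebra_simps)
    then have "-a/t - norm (x + t *\<^sub>R z) / \<bar>t\<bar> \<le> c"
      using c_lower[OF dominated_graph_scaleR[OF G xa, of "-1/t"]] by simp
    then show ?thesis using less by (simp add: field_simps)
  next
    case greater
    have "(1/t) *\<^sub>R x + z = (1/t) *\<^sub>R (x + t *\<^sub>R z)" using greater by (simp add: algebra_simps)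
    then have "c \<le> norm (x + t *\<^sub>R z) / t - a/t"
      using c_upper[OF dominated_graph_scaleR[OF G xa, of "1/t"]] greater by simp
    then show ?thesis using greater by (simp add: field_simps)
  qed (use dominated_graph_le_norm[OF G xa] in simp)
  show ?thesis
    unfolding dominated_graph_def
  proof (intro conjI allI impI)
    fix x a y b assume "(x, a) \<in> ?G'" "(y, b) \<in> ?G'"
    then obtain x1 a1 t1 x2 a2 t2 where "(x1, a1) \<in> G" "(x2, a2) \<in> G"
      and "(x, a) = (x1 + t1 *\<^sub>R z, a1 + t1 * c)" "(y, b) = (x2 + t2 *\<^sub>R z, a2 + t2 * c)"
      by blast
    then show "(x + y, a + b) \<in> ?G'"
      using memG'[OF dominated_graph_add[OF G], of x1 a1 x2 a2 "t1 + t2"] by (simp add: algebra_simps)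
  next
    fix x a r assume "(x, a) \<in> ?G'"
    then obtain x1 a1 t where "(x1, a1) \<in> G" "(x, a) = (x1 + t *\<^sub>R z, a1 + t * c)" by blast
    then show "(r *\<^sub>R x, r * a) \<in> ?G'"
      using memG'[OF dominated_graph_scaleR[OF G], of x1 a1 r "r * t"] by (simp add: algebra_simps)
  next
    show "a \<le> norm x" if "(x, a) \<in> ?G'" for x a using that le_norm by blast
    show "(d, norm d) \<in> ?G'" using memG'[OF dominated_graph_point[OF G], of 0] by simp
  qed
qed

text \<open>A value c at z admitted by dominated_graph_extension exists because the lower bounds
  never exceed the upper bounds, by the triangle inequality.\<close>

lemma dominated_graph_extend:
  fixes z :: "'e::real_normed_vector"
  assumes G: "dominated_graph d G" and z: "\<forall>a. (z, a) \<notin> G"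
  shows "\<exists>G'. dominated_graph d G' \<and> G \<subset> G'"
proof -
  have zero: "(0, 0) \<in> G"
    using dominated_graph_scaleR[OF G dominated_graph_point[OF G], of 0] by simp
  define S where "S = {a - norm (x - z) | x a. (x, a) \<in> G}"
  have squeeze: "a - norm (x - z) \<le> norm (y + z) - b" if "(x, a) \<in> G" "(y, b) \<in> G" for x a y b
  proof -
    have "a + b \<le> norm (x + y)" using dominated_graph_le_norm[OF G dominated_graph_add[OF G that]] .
    also have "\<dots> \<le> norm (x - z) + norm (y + z)"
      using norm_triangle_ineq[of "x - z" "y + z"] by simp
    finally show ?thesis by simp
  qed
  have "bdd_above S" unfolding S_def bdd_above_def using squeeze zero by blast
  then have "a - norm (x - z) \<le> Sup S" if "(x, a) \<in> G" for x a
    using that by (intro cSup_upper) (auto simp: S_def)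
  moreover have "Sup S \<le> norm (y + z) - b" if "(y, b) \<in> G" for y b
    using that squeeze zero by (intro cSup_least) (auto simp: S_def)
  ultimately have "dominated_graph d {(x + t *\<^sub>R z, a + t * Sup S) | x a t. (x, a) \<in> G}"
    by (rule dominated_graph_extension[OF G])
  moreover have "G \<subseteq> {(x + t *\<^sub>R z, a + t * Sup S) | x a t. (x, a) \<in> G}"
    by (force intro: exI[of _ 0])
  moreover have "(z, Sup S) \<in> {(x + t *\<^sub>R z, a + t * Sup S) | x a t. (x, a) \<in> G}"
    using zero by (force intro: exI[of _ 1])
  ultimately show ?thesis using z by blast
qed

lemma dominated_graph_Union_chain:
  assumes C: "C \<in> chains (Collect (dominated_graph d))" "C \<noteq> {}"
  shows "dominated_graph d (\<Union>C)"
proof -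
  have CG: "\<And>G. G \<in> C \<Longrightarrow> dominated_graph d G" using C(1) by (auto simp: chains_def)
  show ?thesis
    unfolding dominated_graph_def
  proof (intro conjI allI impI)
    fix x a y b assume "(x, a) \<in> \<Union>C" "(y, b) \<in> \<Union>C"
    then obtain G where "G \<in> C" "(x, a) \<in> G" "(y, b) \<in> G" using chainsD[OF C(1)] by blast
    then show "(x + y, a + b) \<in> \<Union>C" using CG dominated_graph_add by blast
  qed (use CG C(2) dominated_graph_scaleR dominated_graph_le_norm dominated_graph_point in blast)+
qed

lemma ex_norming_functional:
  fixes d :: "'e::real_normed_vector"
  shows "\<exists>L. bounded_linear L \<and> L d = norm d \<and> (\<forall>x. \<bar>L x\<bar> \<le> norm x)"
proof -
  have "\<exists>G\<in>Collect (dominated_graph d). \<forall>G'\<in>Collect (dominated_graph d). G \<subseteq> G' \<longrightarrow> G' = G"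
  proof (rule Zorn_Lemma2, intro ballI)
    fix C assume "C \<in> chains (Collect (dominated_graph d))"
    then show "\<exists>U\<in>Collect (dominated_graph d). \<forall>G\<in>C. G \<subseteq> U"
      using dominated_graph_Union_chain dominated_graph_line[of d]
      by (cases "C = {}") blast+
  qed
  then obtain G where G: "dominated_graph d G"
    and maximal: "\<And>G'. dominated_graph d G' \<Longrightarrow> G \<subseteq> G' \<Longrightarrow> G' = G"
    by blast
  have total: "\<exists>a. (x, a) \<in> G" for x
    using dominated_graph_extend[OF G] maximal by blast
  define L where "L x = (THE a. (x, a) \<in> G)" for x
  have LG: "(x, L x) \<in> G" for x
    unfolding L_def using total[of x] dominated_graph_unique[OF G] by (metis theI)
  have L_eq: "L x = a" if "(x, a) \<in> G" for x a
    using dominated_graph_unique[OF G LG that] .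
  have add: "L (x + y) = L x + L y" for x y
    using dominated_graph_add[OF G LG LG] L_eq by blast
  have scale: "L (r *\<^sub>R x) = r * L x" for r x
    using dominated_graph_scaleR[OF G LG] L_eq by blast
  have bound: "\<bar>L x\<bar> \<le> norm x" for x
    using dominated_graph_le_norm[OF G LG, of x] dominated_graph_le_norm[OF G LG, of "-x"]
      scale[of "-1" x] by auto
  have "bounded_linear L"
    by (rule bounded_linear_intro[where K=1]) (use add scale bound in auto)
  moreover have "L d = norm d" using L_eq[OF dominated_graph_point[OF G]] .
  ultimately show ?thesis using bound by blast
qed

lemma ex_separating_functionals:
  "\<exists>L::nat \<Rightarrow> 'e::{real_normed_vector,second_countable_topology} \<Rightarrow> real.
     (\<forall>k. bounded_linear (L k)) \<and> (\<forall>v w. (\<forall>k. L k v = L k w) \<longrightarrow> v = w)"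
proof -
  obtain e :: "nat \<Rightarrow> 'e" where e: "\<forall>x r. r > 0 \<longrightarrow> (\<exists>k. dist x (e k) < r)"
    using ex_dense_sequence by blast
  have "\<forall>k. \<exists>L. bounded_linear L \<and> L (e k) = norm (e k) \<and> (\<forall>x. \<bar>L x\<bar> \<le> norm x)"
    using ex_norming_functional by blast
  then obtain L where L: "\<And>k. bounded_linear (L k)" "\<And>k. L k (e k) = norm (e k)"
      "\<And>k x. \<bar>L k x\<bar> \<le> norm x"
    by metis
  have "v = w" if eq: "\<forall>k. L k v = L k w" for v w
  proof (rule ccontr)
    assume "v \<noteq> w"
    then obtain k where k: "norm (v - w - e k) < norm (v - w) / 3"
      using e[rule_format, of "norm (v - w) / 3" "v - w"] by (auto simp: dist_norm)
    interpret Lk: bounded_linear "L k" by (rule L(1))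
    have "L k (v - w) = norm (e k) + L k (v - w - e k)"
      using L(2)[of k] by (simp add: Lk.diff)
    moreover have "norm (v - w) \<le> norm (e k) + norm (v - w - e k)"
      using norm_triangle_ineq[of "e k" "v - w - e k"] by simp
    ultimately have "L k (v - w) > 0" using L(3)[of k "v - w - e k"] k by linarith
    then show False using eq by (simp add: Lk.diff)
  qed
  then show ?thesis using L(1) by blast
qed

section \<open>Dirac kernels\<close>

lemma bounded_linear_borel_measurable: "bounded_linear L \<Longrightarrow> L \<in> borel_measurable borel"
  by (intro borel_measurable_continuous_onI linear_continuous_on)

lemma barycenter_return:
  fixes \<eta> :: "'w \<Rightarrow> 'e::{banach,second_countable_topology}"
  assumes "\<eta> \<in> Lp M p"
  shows "barycenter M p (\<lambda>\<omega>. return borel (\<eta> \<omega>)) \<eta>"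
  unfolding barycenter_def
proof (intro conjI allI impI)
  show "\<eta> \<in> Lp M p" by fact
  fix L :: "'e \<Rightarrow> real" assume "bounded_linear L"
  then have [measurable]: "L \<in> borel_measurable borel" by (rule bounded_linear_borel_measurable)
  have "integrable (return borel x) L \<and> L x = integral\<^sup>L (return borel x) L" for x
  proof
    interpret prob_space "return borel x" by (rule prob_space_return) simp
    show "integrable (return borel x) L"
      by (rule integrable_const_bound[of _ "norm (L x)"]) (simp_all add: AE_return)
    show "L x = integral\<^sup>L (return borel x) L" by (simp add: integral_return)
  qed
  then show "AE \<omega> in M. integrable (return borel (\<eta> \<omega>)) L \<and> L (\<eta> \<omega>) = integral\<^sup>L (return borel (\<eta> \<omega>)) L"
    by simp
qed

lemma return_kernel_in_Kdelta:
  fixes \<eta> :: "'w \<Rightarrow> 'e::{banach,second_countable_topology}"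
  assumes \<eta>: "\<eta> \<in> Lp M p" and F: "closed_random_set M F" and sel: "AE \<omega> in M. \<eta> \<omega> \<in> F \<omega>"
  shows "(\<lambda>\<omega>. return borel (\<eta> \<omega>)) \<in> Kdelta M p F"
proof -
  have "(\<lambda>\<omega>. return borel (\<eta> \<omega>)) \<in> M \<rightarrow>\<^sub>M prob_algebra borel"
    using \<eta> by (intro measurable_compose[OF _ measurable_return_prob_space]) (simp add: Lp_def)
  moreover have "AE \<omega> in M. emeasure (return borel (\<eta> \<omega>)) (F \<omega>) = 1"
    using sel AE_space by eventually_elim (use F in \<open>auto simp: closed_random_set_def\<close>)
  ultimately show ?thesis using barycenter_return[OF \<eta>] unfolding Kdelta_def by auto
qed

text \<open>A barycenter of a Dirac kernel is its atom, because countably many functionals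
  separate the points of E.\<close>

lemma Kdelta_barycenter_AE_mem:
  fixes Y :: "'w \<Rightarrow> 'e::{banach,second_countable_topology}"
  assumes K: "K \<in> Kdelta M p F" and Y: "barycenter M p K Y" and F: "closed_random_set M F"
  shows "AE \<omega> in M. Y \<omega> \<in> F \<omega>"
proof -
  obtain L :: "nat \<Rightarrow> 'e \<Rightarrow> real" where L: "\<And>k. bounded_linear (L k)"
      "\<And>v w. (\<forall>k. L k v = L k w) \<Longrightarrow> v = w"
    using ex_separating_functionals by metis
  have "AE \<omega> in M. integrable (K \<omega>) (L k) \<and> L k (Y \<omega>) = integral\<^sup>L (K \<omega>) (L k)" for k
    using Y L(1) unfolding barycenter_def by blast
  then have "AE \<omega> in M. \<forall>k. L k (Y \<omega>) = integral\<^sup>L (K \<omega>) (L k)"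
    by (simp add: AE_all_countable)
  moreover have "AE \<omega> in M. emeasure (K \<omega>) (F \<omega>) = 1" "AE \<omega> in M. \<exists>x. K \<omega> = return borel x"
    using K unfolding Kdelta_def by auto
  ultimately show ?thesis
    using AE_space
  proof eventually_elim
    case (elim \<omega>)
    then obtain x where x: "K \<omega> = return borel x" by blast
    have "L k (Y \<omega>) = L k x" for k
      using elim(1) x by (simp add: integral_return bounded_linear_borel_measurable[OF L(1)])
    then have "Y \<omega> = x" using L(2) by blast
    moreover have "F \<omega> \<in> sets borel" using F elim by (simp add: closed_random_set_def)
    ultimately show ?case using elim(2) x by (simp add: indicator_def split: if_splits)
  qed
qed

section \<open>Convergence in L^p and in probability\<close>

lemma Lp_borel_measurable: "f \<in> Lp M p \<Longrightarrow> f \<in> borel_measurable M"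
  by (simp add: Lp_def)

lemma Lp_integrable_powr: "f \<in> Lp M p \<Longrightarrow> p \<noteq> 0 \<Longrightarrow> integrable M (\<lambda>\<omega>. norm (f \<omega>) powr p)"
  by (simp add: Lp_def)

lemma LpI:
  fixes g :: "'w \<Rightarrow> 'e::{banach,second_countable_topology}"
  assumes g: "g \<in> borel_measurable M" and h: "p \<noteq> 0 \<Longrightarrow> integrable M h"
    and bound: "\<And>\<omega>. \<omega> \<in> space M \<Longrightarrow> norm (g \<omega>) powr p \<le> h \<omega>"
  shows "g \<in> Lp M p"
proof -
  have "integrable M (\<lambda>\<omega>. norm (g \<omega>) powr p)" if "p \<noteq> 0"
  proof (rule Bochner_Integration.integrable_bound[OF h[OF that]])
    show "(\<lambda>\<omega>. norm (g \<omega>) powr p) \<in> borel_measurable M" using g by measurable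
    show "AE \<omega> in M. norm (norm (g \<omega>) powr p) \<le> norm (h \<omega>)"
      using bound by (intro AE_I2) (auto intro: order_trans[OF _ abs_ge_self])
  qed
  then show ?thesis using g by (auto simp: Lp_def)
qed

lemma Lp_diff_integrable:
  fixes f g :: "'w \<Rightarrow> 'e::{banach,second_countable_topology}"
  assumes f: "f \<in> Lp M p" and g: "g \<in> Lp M p" and p: "p > 0"
  shows "integrable M (\<lambda>\<omega>. norm (f \<omega> - g \<omega>) powr p)"
proof (rule Bochner_Integration.integrable_bound)
  show "integrable M (\<lambda>\<omega>. 2 powr p * (norm (f \<omega>) powr p + norm (g \<omega>) powr p))"
    using Lp_integrable_powr[OF f] Lp_integrable_powr[OF g] p by auto
  show "(\<lambda>\<omega>. norm (f \<omega> - g \<omega>) powr p) \<in> borel_measurable M"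
    using Lp_borel_measurable[OF f] Lp_borel_measurable[OF g] by measurable
  have "norm (f \<omega> - g \<omega>) powr p \<le> 2 powr p * (norm (f \<omega>) powr p + norm (g \<omega>) powr p)" for \<omega>
    using p by (intro powr_le_two_powr_add norm_triangle_ineq4) auto
  then show "AE \<omega> in M. norm (norm (f \<omega> - g \<omega>) powr p)
      \<le> norm (2 powr p * (norm (f \<omega>) powr p + norm (g \<omega>) powr p))"
    by (intro AE_I2) simp
qed

lemma conv_p_const: "conv_p M p (\<lambda>n. \<xi>) \<xi>"
  by (simp add: conv_p_def)

lemma clp_subset_Lp: "clp M p S \<subseteq> Lp M p"
  by (auto simp: clp_def)

lemma clp_superset:
  assumes "S \<subseteq> Lp M p" shows "S \<subseteq> clp M p S"
proof
  fix \<xi> assume "\<xi> \<in> S"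
  then show "\<xi> \<in> clp M p S"
    using assms conv_p_const[of M p \<xi>] unfolding clp_def by (intro CollectI conjI exI[of _ "\<lambda>n. \<xi>"]) auto
qed

lemma clp_mono: "S \<subseteq> T \<Longrightarrow> clp M p S \<subseteq> clp M p T"
  unfolding clp_def by blast

lemma ae_mem_cong:
  assumes "ae_eq M f g" "ae_mem M g A"
  shows "ae_mem M f A"
proof -
  obtain h where "h \<in> A" "AE \<omega> in M. g \<omega> = h \<omega>" using assms(2) by (auto simp: ae_mem_def ae_eq_def)
  moreover have "AE \<omega> in M. f \<omega> = h \<omega>"
    using assms(1) calculation(2) unfolding ae_eq_def by eventually_elim simp
  ultimately show ?thesis by (auto simp: ae_mem_def ae_eq_def)
qed

locale complete_prob_Lp = prob_space M for M :: "'w measure" +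
  fixes p :: real
  assumes complete: "complete_measure M" and exponent: "p = 0 \<or> p \<ge> 1"
begin

lemma borel_measurable_cong_AE:
  fixes f g :: "'w \<Rightarrow> 'e::{banach,second_countable_topology}"
  assumes f: "f \<in> borel_measurable M" and ae: "AE \<omega> in M. f \<omega> = g \<omega>"
  shows "g \<in> borel_measurable M"
proof (rule borel_measurableI)
  fix S :: "'e set" assume "open S"
  then have fS: "f -` S \<inter> space M \<in> sets M" using f by (simp add: measurable_sets borel_open)
  have "AE \<omega> in M. \<omega> \<in> f -` S \<inter> space M \<longleftrightarrow> \<omega> \<in> g -` S \<inter> space M"
    using ae AE_space by eventually_elim auto
  then show "g -` S \<inter> space M \<in> sets M"
    by (rule complete_measure.in_sets_AE[OF complete _ fS]) auto
qed

lemma Lp_cong_AE: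
  fixes f g :: "'w \<Rightarrow> 'e::{banach,second_countable_topology}"
  assumes f: "f \<in> Lp M p" and ae: "AE \<omega> in M. f \<omega> = g \<omega>"
  shows "g \<in> Lp M p"
proof -
  have g: "g \<in> borel_measurable M" using borel_measurable_cong_AE[OF Lp_borel_measurable[OF f] ae] .
  have "AE \<omega> in M. norm (f \<omega>) powr p = norm (g \<omega>) powr p" using ae by eventually_elim simp
  moreover have "p = 0 \<or> integrable M (\<lambda>\<omega>. norm (f \<omega>) powr p)" using f by (simp add: Lp_def)
  ultimately have "p = 0 \<or> integrable M (\<lambda>\<omega>. norm (g \<omega>) powr p)"
    using g by (auto intro: integrable_cong_AE_imp)
  then show ?thesis using g by (simp add: Lp_def)
qed

text \<open>For p = 0 this is the Ky Fan condition, whose values metrize convergence in probability.\<close>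

definition near :: "('w \<Rightarrow> 'e::{banach,second_countable_topology}) \<Rightarrow> ('w \<Rightarrow> 'e) \<Rightarrow> real \<Rightarrow> bool" where
  "near f g \<delta> \<longleftrightarrow> (if p = 0 then measure M {\<omega>\<in>space M. norm (f \<omega> - g \<omega>) > \<delta>} \<le> \<delta>
     else (\<integral>\<omega>. norm (f \<omega> - g \<omega>) powr p \<partial>M) \<le> \<delta>)"

lemma measure_norm_diff_gt_antimono:
  fixes f g :: "'w \<Rightarrow> 'e::{banach,second_countable_topology}"
  assumes [measurable]: "f \<in> borel_measurable M" "g \<in> borel_measurable M" and "\<delta> \<le> \<delta>'"
  shows "measure M {\<omega>\<in>space M. norm (f \<omega> - g \<omega>) > \<delta>'} \<le> measure M {\<omega>\<in>space M. norm (f \<omega> - g \<omega>) > \<delta>}"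
  using \<open>\<delta> \<le> \<delta>'\<close> by (intro finite_measure_mono) auto

lemma near_mono:
  fixes f g :: "'w \<Rightarrow> 'e::{banach,second_countable_topology}"
  assumes "f \<in> borel_measurable M" "g \<in> borel_measurable M" "near f g \<delta>" "\<delta> \<le> \<delta>'"
  shows "near f g \<delta>'"
  using assms measure_norm_diff_gt_antimono[OF assms(1,2,4)] by (auto simp: near_def)

lemma near_cong_AE:
  fixes f f' g g' :: "'w \<Rightarrow> 'e::{banach,second_countable_topology}"
  assumes [measurable]: "f \<in> borel_measurable M" "f' \<in> borel_measurable M"
    "g \<in> borel_measurable M" "g' \<in> borel_measurable M"
    and ae: "AE \<omega> in M. f \<omega> = f' \<omega>" "AE \<omega> in M. g \<omega> = g' \<omega>"
  shows "near f g \<delta> \<longleftrightarrow> near f' g' \<delta>"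
proof -
  have "measure M {\<omega>\<in>space M. norm (f \<omega> - g \<omega>) > \<delta>} = measure M {\<omega>\<in>space M. norm (f' \<omega> - g' \<omega>) > \<delta>}"
    using ae by (intro measure_eq_AE) auto
  moreover have "(\<integral>\<omega>. norm (f \<omega> - g \<omega>) powr p \<partial>M) = (\<integral>\<omega>. norm (f' \<omega> - g' \<omega>) powr p \<partial>M)"
    using ae by (intro integral_cong_AE) auto
  ultimately show ?thesis by (simp add: near_def)
qed

lemma near_trans:
  fixes f g h :: "'w \<Rightarrow> 'e::{banach,second_countable_topology}"
  assumes f: "f \<in> Lp M p" and g: "g \<in> Lp M p" and h: "h \<in> Lp M p"
    and fg: "near f g \<delta>" and gh: "near g h \<delta>"
  shows "near f h (2 * 2 powr p * \<delta>)"
proof (cases "p = 0")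
  case True
  note [measurable] = f[THEN Lp_borel_measurable] g[THEN Lp_borel_measurable] h[THEN Lp_borel_measurable]
  have "{\<omega>\<in>space M. norm (f \<omega> - h \<omega>) > 2 * \<delta>} \<subseteq>
        {\<omega>\<in>space M. norm (f \<omega> - g \<omega>) > \<delta>} \<union> {\<omega>\<in>space M. norm (g \<omega> - h \<omega>) > \<delta>}"
  proof safe
    fix \<omega> assume "2 * \<delta> < norm (f \<omega> - h \<omega>)" "\<not> \<delta> < norm (g \<omega> - h \<omega>)"
    then show "\<delta> < norm (f \<omega> - g \<omega>)" using norm_triangle_ineq[of "f \<omega> - g \<omega>" "g \<omega> - h \<omega>"] by simp
  qed
  then have "measure M {\<omega>\<in>space M. norm (f \<omega> - h \<omega>) > 2 * \<delta>} \<le>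
        measure M ({\<omega>\<in>space M. norm (f \<omega> - g \<omega>) > \<delta>} \<union> {\<omega>\<in>space M. norm (g \<omega> - h \<omega>) > \<delta>})"
    by (intro finite_measure_mono) measurable
  also have "\<dots> \<le> measure M {\<omega>\<in>space M. norm (f \<omega> - g \<omega>) > \<delta>} + measure M {\<omega>\<in>space M. norm (g \<omega> - h \<omega>) > \<delta>}"
    by (intro measure_subadditive) measurable
  finally show ?thesis using fg gh unfolding near_def using True by simp
next
  case False
  then have p: "p > 0" using exponent by auto
  have "(\<integral>\<omega>. norm (f \<omega> - h \<omega>) powr p \<partial>M) \<le>
        (\<integral>\<omega>. 2 powr p * (norm (f \<omega> - g \<omega>) powr p + norm (g \<omega> - h \<omega>) powr p) \<partial>M)"
  proof (rule integral_mono)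
    fix \<omega>
    show "norm (f \<omega> - h \<omega>) powr p \<le> 2 powr p * (norm (f \<omega> - g \<omega>) powr p + norm (g \<omega> - h \<omega>) powr p)"
      using p norm_triangle_ineq[of "f \<omega> - g \<omega>" "g \<omega> - h \<omega>"] by (intro powr_le_two_powr_add) auto
  qed (use Lp_diff_integrable[OF f g p] Lp_diff_integrable[OF g h p] Lp_diff_integrable[OF f h p] in auto)
  also have "\<dots> = 2 powr p * ((\<integral>\<omega>. norm (f \<omega> - g \<omega>) powr p \<partial>M) + (\<integral>\<omega>. norm (g \<omega> - h \<omega>) powr p \<partial>M))"
    using Lp_diff_integrable[OF f g p] Lp_diff_integrable[OF g h p] by simp
  also have "\<dots> \<le> 2 powr p * (\<delta> + \<delta>)"
    using fg gh False by (intro mult_left_mono add_mono) (auto simp: near_def)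
  finally show ?thesis using False by (simp add: near_def)
qed

lemma conv_p_iff_near:
  fixes X :: "nat \<Rightarrow> 'w \<Rightarrow> 'e::{banach,second_countable_topology}"
  assumes X: "\<And>n. X n \<in> borel_measurable M" and \<xi>: "\<xi> \<in> borel_measurable M"
  shows "conv_p M p X \<xi> \<longleftrightarrow> (\<forall>\<delta>>0. eventually (\<lambda>n. near (X n) \<xi> \<delta>) sequentially)"
proof (cases "p = 0")
  case True
  let ?P = "\<lambda>\<epsilon> n. measure M {\<omega>\<in>space M. norm (X n \<omega> - \<xi> \<omega>) > \<epsilon>}"
  have "(\<forall>\<epsilon>>0. ?P \<epsilon> \<longlonglongrightarrow> 0) \<longleftrightarrow> (\<forall>\<delta>>0. eventually (\<lambda>n. ?P \<delta> n \<le> \<delta>) sequentially)"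
  proof safe
    show "eventually (\<lambda>n. ?P \<delta> n \<le> \<delta>) sequentially" if "\<forall>\<epsilon>>0. ?P \<epsilon> \<longlonglongrightarrow> 0" "\<delta> > 0" for \<delta>
      using that tendsto_zero_iff_eventually_le[of "?P \<delta>"] by simp
  next
    fix \<epsilon> :: real assume le: "\<forall>\<delta>>0. eventually (\<lambda>n. ?P \<delta> n \<le> \<delta>) sequentially" and "\<epsilon> > 0"
    have "eventually (\<lambda>n. ?P \<epsilon> n \<le> r) sequentially" if "r > 0" for r
    proof -
      have "eventually (\<lambda>n. ?P (min \<epsilon> r) n \<le> min \<epsilon> r) sequentially"
        using le \<open>\<epsilon> > 0\<close> that by (meson min_less_iff_conj)
      then show ?thesis
      proof (rule eventually_mono)
        fix n assume "?P (min \<epsilon> r) n \<le> min \<epsilon> r"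
        then show "?P \<epsilon> n \<le> r" using measure_norm_diff_gt_antimono[OF X[of n] \<xi>, of "min \<epsilon> r" \<epsilon>] by simp
      qed
    qed
    then show "?P \<epsilon> \<longlonglongrightarrow> 0" using tendsto_zero_iff_eventually_le[of "?P \<epsilon>"] by simp
  qed
  then show ?thesis unfolding conv_p_def near_def using True by simp
next
  case False
  then show ?thesis
    using tendsto_zero_iff_eventually_le[of "\<lambda>n. \<integral>\<omega>. norm (X n \<omega> - \<xi> \<omega>) powr p \<partial>M"]
    by (simp add: conv_p_def near_def)
qed

lemma conv_p_of_near:
  fixes X :: "nat \<Rightarrow> 'w \<Rightarrow> 'e::{banach,second_countable_topology}"
  assumes X: "\<And>n. X n \<in> borel_measurable M" and \<xi>: "\<xi> \<in> borel_measurable M"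
    and near: "\<And>n. near (X n) \<xi> (1 / (real n + 1))"
  shows "conv_p M p X \<xi>"
  unfolding conv_p_iff_near[OF X \<xi>]
proof (intro allI impI)
  fix \<delta> :: real assume "\<delta> > 0"
  then obtain N :: nat where "1 / real (Suc N) < \<delta>" by (rule nat_approx_posE)
  then have N: "1 / (real N + 1) < \<delta>" by (simp add: add.commute)
  show "eventually (\<lambda>n. near (X n) \<xi> \<delta>) sequentially"
    unfolding eventually_sequentially
  proof (intro exI allI impI)
    fix n assume "N \<le> n"
    then have "1 / (real n + 1) \<le> 1 / (real N + 1)" by (simp add: frac_le)
    then have "1 / (real n + 1) \<le> \<delta>" using N by simp
    then show "near (X n) \<xi> \<delta>" using near_mono[OF X \<xi> near] by blast
  qed
qed

lemma conv_p_cong_AE: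
  fixes X Y :: "nat \<Rightarrow> 'w \<Rightarrow> 'e::{banach,second_countable_topology}"
  assumes X: "\<And>n. X n \<in> borel_measurable M" and Y: "\<And>n. Y n \<in> borel_measurable M"
    and XY: "\<And>n. AE \<omega> in M. X n \<omega> = Y n \<omega>"
    and \<xi>: "\<xi> \<in> borel_measurable M" and \<eta>: "\<eta> \<in> borel_measurable M"
    and \<xi>\<eta>: "AE \<omega> in M. \<xi> \<omega> = \<eta> \<omega>"
  shows "conv_p M p X \<xi> \<longleftrightarrow> conv_p M p Y \<eta>"
  using near_cong_AE[OF X Y \<xi> \<eta> XY \<xi>\<eta>] by (simp add: conv_p_iff_near[OF X \<xi>] conv_p_iff_near[OF Y \<eta>])

lemma conv_p_ex_near:
  fixes X :: "nat \<Rightarrow> 'w \<Rightarrow> 'e::{banach,second_countable_topology}"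
  assumes "\<And>n. X n \<in> borel_measurable M" "\<xi> \<in> borel_measurable M" "conv_p M p X \<xi>" "\<delta> > 0"
  shows "\<exists>n. near (X n) \<xi> \<delta>"
proof -
  have "eventually (\<lambda>n. near (X n) \<xi> \<delta>) sequentially"
    using assms(3,4) by (simp add: conv_p_iff_near[OF assms(1,2)])
  then show ?thesis by (auto simp: eventually_sequentially)
qed

lemma clp_cong_AE:
  fixes S :: "('w \<Rightarrow> 'e::{banach,second_countable_topology}) set"
  assumes S: "S \<subseteq> Lp M p" and \<xi>: "\<xi> \<in> clp M p S" and ae: "AE \<omega> in M. \<xi> \<omega> = \<eta> \<omega>"
  shows "\<eta> \<in> clp M p S"
proof -
  from \<xi> obtain X where X: "\<And>n. X n \<in> S" "conv_p M p X \<xi>" and \<xi>L: "\<xi> \<in> Lp M p"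
    by (auto simp: clp_def)
  have \<eta>L: "\<eta> \<in> Lp M p" using Lp_cong_AE[OF \<xi>L ae] .
  have XM: "X n \<in> borel_measurable M" for n using X(1) S Lp_borel_measurable by blast
  have "conv_p M p X \<eta>"
    using conv_p_cong_AE[of X X \<xi> \<eta>, OF XM XM _ Lp_borel_measurable[OF \<xi>L] Lp_borel_measurable[OF \<eta>L] ae] X(2)
    by simp
  then show ?thesis using X \<eta>L by (auto simp: clp_def)
qed

text \<open>A diagonal choice, with the errors controlled by near_trans.\<close>

lemma clp_limit:
  fixes S :: "('w \<Rightarrow> 'e::{banach,second_countable_topology}) set"
  assumes S: "S \<subseteq> Lp M p" and X: "\<And>n. X n \<in> clp M p S" and conv: "conv_p M p X \<xi>"
    and \<xi>: "\<xi> \<in> Lp M p"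
  shows "\<xi> \<in> clp M p S"
proof -
  have XL: "X n \<in> Lp M p" for n using X clp_subset_Lp by blast
  have "\<exists>z\<in>S. near z \<xi> (1 / (real m + 1))" for m
  proof -
    define \<delta> where "\<delta> = 1 / (2 * 2 powr p * (real m + 1))"
    have "\<delta> > 0" by (simp add: \<delta>_def)
    then obtain n where n: "near (X n) \<xi> \<delta>"
      using conv_p_ex_near[OF Lp_borel_measurable[OF XL] Lp_borel_measurable[OF \<xi>] conv] by blast
    from X[of n] obtain Z where Z: "\<And>k. Z k \<in> S" "conv_p M p Z (X n)" by (auto simp: clp_def)
    have ZL: "Z k \<in> Lp M p" for k using Z(1) S by blast
    obtain k where k: "near (Z k) (X n) \<delta>"
      using conv_p_ex_near[OF Lp_borel_measurable[OF ZL] Lp_borel_measurable[OF XL] Z(2) \<open>\<delta> > 0\<close>]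
      by blast
    have "near (Z k) \<xi> (2 * 2 powr p * \<delta>)" using near_trans[OF ZL XL \<xi> k n] .
    then show ?thesis using Z(1) by (auto simp: \<delta>_def)
  qed
  then obtain Y where Y: "\<And>m. Y m \<in> S" "\<And>m. near (Y m) \<xi> (1 / (real m + 1))" by metis
  have YL: "Y m \<in> Lp M p" for m using Y(1) S by blast
  have "conv_p M p Y \<xi>"
    using conv_p_of_near[OF Lp_borel_measurable[OF YL] Lp_borel_measurable[OF \<xi>] Y(2)] .
  then show ?thesis using Y(1) \<xi> by (auto simp: clp_def)
qed

section \<open>Decompositions\<close>

definition mix :: "'w set \<Rightarrow> ('w \<Rightarrow> 'e::real_vector) \<Rightarrow> ('w \<Rightarrow> 'e) \<Rightarrow> 'w \<Rightarrow> 'e" where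
  "mix B f g = (\<lambda>\<omega>. indicator B \<omega> *\<^sub>R f \<omega> + indicator (space M - B) \<omega> *\<^sub>R g \<omega>)"

lemma mix_apply: "\<omega> \<in> space M \<Longrightarrow> mix B f g \<omega> = (if \<omega> \<in> B then f \<omega> else g \<omega>)"
  by (simp add: mix_def indicator_def)

lemma mix_measurable[measurable]:
  fixes f g :: "'w \<Rightarrow> 'e::{banach,second_countable_topology}"
  assumes [measurable]: "B \<in> sets M" "f \<in> borel_measurable M" "g \<in> borel_measurable M"
  shows "mix B f g \<in> borel_measurable M"
  unfolding mix_def by measurable

lemma mix_Lp:
  fixes f g :: "'w \<Rightarrow> 'e::{banach,second_countable_topology}"
  assumes B: "B \<in> sets M" and f: "f \<in> Lp M p" and g: "g \<in> Lp M p"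
  shows "mix B f g \<in> Lp M p"
proof (rule LpI)
  show "mix B f g \<in> borel_measurable M"
    using B Lp_borel_measurable[OF f] Lp_borel_measurable[OF g] by (rule mix_measurable)
  show "integrable M (\<lambda>\<omega>. norm (f \<omega>) powr p + norm (g \<omega>) powr p)" if "p \<noteq> 0"
    using Lp_integrable_powr[OF f that] Lp_integrable_powr[OF g that] by auto
  show "norm (mix B f g \<omega>) powr p \<le> norm (f \<omega>) powr p + norm (g \<omega>) powr p" if "\<omega> \<in> space M" for \<omega>
    using that by (simp add: mix_apply)
qed

lemma near_mix:
  fixes f f' g g' :: "'w \<Rightarrow> 'e::{banach,second_countable_topology}"
  assumes B: "B \<in> sets M" and L: "f \<in> Lp M p" "f' \<in> Lp M p" "g \<in> Lp M p" "g' \<in> Lp M p"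
    and fg: "near f g \<delta>" and fg': "near f' g' \<delta>"
  shows "near (mix B f f') (mix B g g') (2 * \<delta>)"
proof -
  have diff: "norm (mix B f f' \<omega> - mix B g g' \<omega>) = (if \<omega> \<in> B then norm (f \<omega> - g \<omega>) else norm (f' \<omega> - g' \<omega>))"
    if "\<omega> \<in> space M" for \<omega>
    using that by (simp add: mix_apply)
  show ?thesis
  proof (cases "p = 0")
    case True
    note [measurable] = B L[THEN Lp_borel_measurable]
    have "0 \<le> \<delta>" using fg True measure_nonneg[of M] unfolding near_def by (metis order.trans)
    then have "{\<omega>\<in>space M. norm (mix B f f' \<omega> - mix B g g' \<omega>) > 2 * \<delta>} \<subseteq>
        {\<omega>\<in>space M. norm (f \<omega> - g \<omega>) > \<delta>} \<union> {\<omega>\<in>space M. norm (f' \<omega> - g' \<omega>) > \<delta>}"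
      by (auto simp: diff split: if_splits)
    then have "measure M {\<omega>\<in>space M. norm (mix B f f' \<omega> - mix B g g' \<omega>) > 2 * \<delta>}
        \<le> measure M ({\<omega>\<in>space M. norm (f \<omega> - g \<omega>) > \<delta>} \<union> {\<omega>\<in>space M. norm (f' \<omega> - g' \<omega>) > \<delta>})"
      by (intro finite_measure_mono) measurable
    also have "\<dots> \<le> measure M {\<omega>\<in>space M. norm (f \<omega> - g \<omega>) > \<delta>} + measure M {\<omega>\<in>space M. norm (f' \<omega> - g' \<omega>) > \<delta>}"
      by (intro measure_subadditive) measurable
    finally show ?thesis using fg fg' unfolding near_def using True by simp
  next
    case False
    then have p: "p > 0" using exponent by auto
    note int = Lp_diff_integrable[OF _ _ p]
    have "(\<integral>\<omega>. norm (mix B f f' \<omega> - mix B g g' \<omega>) powr p \<partial>M)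
        \<le> (\<integral>\<omega>. norm (f \<omega> - g \<omega>) powr p + norm (f' \<omega> - g' \<omega>) powr p \<partial>M)"
      using int[OF mix_Lp[OF B L(1,2)] mix_Lp[OF B L(3,4)]] int[OF L(1,3)] int[OF L(2,4)]
      by (intro integral_mono_AE AE_I2) (auto simp: diff)
    also have "\<dots> \<le> 2 * \<delta>" using fg fg' int[OF L(1,3)] int[OF L(2,4)] False by (simp add: near_def)
    finally show ?thesis using False by (simp add: near_def)
  qed
qed

lemma conv_p_mix:
  fixes X Z :: "nat \<Rightarrow> 'w \<Rightarrow> 'e::{banach,second_countable_topology}"
  assumes B: "B \<in> sets M" and L: "\<And>n. X n \<in> Lp M p" "\<And>n. Z n \<in> Lp M p" "\<xi> \<in> Lp M p" "\<zeta> \<in> Lp M p"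
    and X: "conv_p M p X \<xi>" and Z: "conv_p M p Z \<zeta>"
  shows "conv_p M p (\<lambda>n. mix B (X n) (Z n)) (mix B \<xi> \<zeta>)"
proof -
  note [measurable] = B L[THEN Lp_borel_measurable]
  have "eventually (\<lambda>n. near (mix B (X n) (Z n)) (mix B \<xi> \<zeta>) \<delta>) sequentially" if "\<delta> > 0" for \<delta>
  proof -
    have "eventually (\<lambda>n. near (X n) \<xi> (\<delta>/2) \<and> near (Z n) \<zeta> (\<delta>/2)) sequentially"
      using X Z that by (simp add: conv_p_iff_near eventually_conj)
    then show ?thesis by (rule eventually_mono) (use near_mix[OF B L(1,2,3,4)] in fastforce)
  qed
  then show ?thesis by (simp add: conv_p_iff_near)
qed

lemma dec_subset_Lp:
  fixes A :: "('w \<Rightarrow> 'e::{banach,second_countable_topology}) set"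
  assumes A: "A \<subseteq> Lp M p"
  shows "dec M A \<subseteq> Lp M p"
proof
  fix \<eta> assume "\<eta> \<in> dec M A"
  then obtain m :: nat and \<xi> B where h: "\<forall>i<m. \<xi> i \<in> A \<and> B i \<in> sets M" "disjoint_family_on B {..<m}"
      "(\<Union>i<m. B i) = space M" "\<eta> = (\<lambda>\<omega>. \<Sum>i<m. indicator (B i) \<omega> *\<^sub>R \<xi> i \<omega>)"
    unfolding dec_def by blast
  have [measurable]: "\<And>i. i < m \<Longrightarrow> \<xi> i \<in> borel_measurable M" "\<And>i. i < m \<Longrightarrow> B i \<in> sets M"
    using h(1) A by (auto simp: Lp_def)
  show "\<eta> \<in> Lp M p"
  proof (rule LpI)
    show "\<eta> \<in> borel_measurable M" unfolding h(4) by measurable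
    show "integrable M (\<lambda>\<omega>. \<Sum>i<m. norm (\<xi> i \<omega>) powr p)" if "p \<noteq> 0"
      using h(1) A Lp_integrable_powr[OF _ that] by (intro Bochner_Integration.integrable_sum) blast
    fix \<omega> assume "\<omega> \<in> space M"
    then obtain i where i: "i < m" "\<omega> \<in> B i" using h(3) by blast
    then have "\<eta> \<omega> = \<xi> i \<omega>"
      unfolding h(4) using sum_indicator_disjoint_family[of "{..<m}" B i \<omega>] h(2) by simp
    then show "norm (\<eta> \<omega>) powr p \<le> (\<Sum>i<m. norm (\<xi> i \<omega>) powr p)"
      using i by (auto intro: member_le_sum)
  qed
qed

lemma subset_clp_dec:
  fixes A :: "('w \<Rightarrow> 'e::{banach,second_countable_topology}) set"
  assumes A: "A \<subseteq> Lp M p"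
  shows "A \<subseteq> clp M p (dec M A)"
proof
  fix \<xi> assume \<xi>: "\<xi> \<in> A"
  have "(\<lambda>\<omega>. indicator (space M) \<omega> *\<^sub>R \<xi> \<omega>) \<in> dec M A"
    unfolding dec_def using \<xi>
    by (intro CollectI exI[of _ "1::nat"] exI[of _ "\<lambda>_. \<xi>"] exI[of _ "\<lambda>_. space M"])
      (auto simp: disjoint_family_on_def)
  then have "(\<lambda>\<omega>. indicator (space M) \<omega> *\<^sub>R \<xi> \<omega>) \<in> clp M p (dec M A)"
    using clp_superset[OF dec_subset_Lp[OF A]] by blast
  then show "\<xi> \<in> clp M p (dec M A)"
    by (rule clp_cong_AE[OF dec_subset_Lp[OF A]]) simp
qed

lemma dec_mix:
  fixes A :: "('w \<Rightarrow> 'e::{banach,second_countable_topology}) set"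
  assumes X: "X \<in> dec M A" and Z: "Z \<in> dec M A" and C: "C \<in> sets M"
  shows "\<exists>W\<in>dec M A. \<forall>\<omega>\<in>space M. W \<omega> = mix C X Z \<omega>"
proof -
  obtain m :: nat and \<xi> B where h: "\<forall>i<m. \<xi> i \<in> A \<and> B i \<in> sets M" "disjoint_family_on B {..<m}"
      "(\<Union>i<m. B i) = space M" "X = (\<lambda>\<omega>. \<Sum>i<m. indicator (B i) \<omega> *\<^sub>R \<xi> i \<omega>)"
    using X unfolding dec_def by blast
  obtain m' :: nat and \<zeta> B' where k: "\<forall>i<m'. \<zeta> i \<in> A \<and> B' i \<in> sets M" "disjoint_family_on B' {..<m'}"
      "(\<Union>i<m'. B' i) = space M" "Z = (\<lambda>\<omega>. \<Sum>i<m'. indicator (B' i) \<omega> *\<^sub>R \<zeta> i \<omega>)"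
    using Z unfolding dec_def by blast
  define \<theta> where "\<theta> i = (if i < m then \<xi> i else \<zeta> (i - m))" for i
  define D where "D i = (if i < m then C \<inter> B i else (space M - C) \<inter> B' (i - m))" for i
  have D_sets: "\<forall>i<m + m'. \<theta> i \<in> A \<and> D i \<in> sets M"
    using h(1) k(1) C by (auto simp: \<theta>_def D_def)
  have D_disj: "disjoint_family_on D {..<m + m'}"
    unfolding D_def by (rule disjoint_family_on_glue[OF h(2) k(2)])
  have D_cover: "(\<Union>i<m + m'. D i) = space M"
    unfolding D_def by (rule UN_glue[OF h(3) k(3)])
  define W where "W = (\<lambda>\<omega>. \<Sum>i<m + m'. indicator (D i) \<omega> *\<^sub>R \<theta> i \<omega>)"
  have "W \<in> dec M A" unfolding dec_def W_def
    by (intro CollectI exI[of _ "m + m'"] exI[of _ \<theta>] exI[of _ D] conjI D_sets D_disj D_cover refl)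
  moreover have "W \<omega> = mix C X Z \<omega>" if \<omega>: "\<omega> \<in> space M" for \<omega>
  proof -
    obtain i where i: "i < m + m'" "\<omega> \<in> D i" using D_cover \<omega> by blast
    have "W \<omega> = \<theta> i \<omega>"
      using sum_indicator_disjoint_family[of "{..<m + m'}" D i \<omega> "\<lambda>j. \<theta> j \<omega>"] D_disj i
      by (simp add: W_def)
    also have "\<dots> = mix C X Z \<omega>"
    proof (cases "i < m")
      case True
      then have "\<omega> \<in> C" "\<omega> \<in> B i" using i by (auto simp: D_def)
      moreover have "X \<omega> = \<xi> i \<omega>"
        using sum_indicator_disjoint_family[of "{..<m}" B i \<omega> "\<lambda>j. \<xi> j \<omega>"] h(2) True \<open>\<omega> \<in> B i\<close>
        by (simp add: h(4))
      ultimately show ?thesis using True \<omega> by (simp add: \<theta>_def mix_apply)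
    next
      case False
      then have "\<omega> \<notin> C" "\<omega> \<in> B' (i - m)" "i - m < m'" using i by (auto simp: D_def)
      moreover have "Z \<omega> = \<zeta> (i - m) \<omega>"
        using sum_indicator_disjoint_family[of "{..<m'}" B' "i - m" \<omega> "\<lambda>j. \<zeta> j \<omega>"] k(2) calculation
        by (simp add: k(4))
      ultimately show ?thesis using False \<omega> by (simp add: \<theta>_def mix_apply)
    qed
    finally show ?thesis .
  qed
  ultimately show ?thesis by blast
qed

definition mix_closed :: "('w \<Rightarrow> 'e::real_vector) set \<Rightarrow> bool" where
  "mix_closed D \<longleftrightarrow> (\<forall>\<xi>\<in>D. \<forall>\<zeta>\<in>D. \<forall>B\<in>sets M. mix B \<xi> \<zeta> \<in> D)"

lemma mix_closed_clp_dec: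
  fixes A :: "('w \<Rightarrow> 'e::{banach,second_countable_topology}) set"
  assumes A: "A \<subseteq> Lp M p"
  shows "mix_closed (clp M p (dec M A))"
  unfolding mix_closed_def
proof (intro ballI)
  fix \<xi> \<zeta> B assume \<xi>: "\<xi> \<in> clp M p (dec M A)" and \<zeta>: "\<zeta> \<in> clp M p (dec M A)" and B: "B \<in> sets M"
  have dL: "dec M A \<subseteq> Lp M p" using dec_subset_Lp[OF A] .
  from \<xi> obtain X where X: "\<And>n. X n \<in> dec M A" "conv_p M p X \<xi>" and \<xi>L: "\<xi> \<in> Lp M p"
    by (auto simp: clp_def)
  from \<zeta> obtain Z where Z: "\<And>n. Z n \<in> dec M A" "conv_p M p Z \<zeta>" and \<zeta>L: "\<zeta> \<in> Lp M p"
    by (auto simp: clp_def)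
  have "\<forall>n. \<exists>W\<in>dec M A. \<forall>\<omega>\<in>space M. W \<omega> = mix B (X n) (Z n) \<omega>"
    using dec_mix[OF X(1) Z(1) B] by blast
  then obtain W where W: "\<And>n. W n \<in> dec M A" "\<And>n. \<forall>\<omega>\<in>space M. W n \<omega> = mix B (X n) (Z n) \<omega>"
    by metis
  have XL: "X n \<in> Lp M p" "Z n \<in> Lp M p" "W n \<in> Lp M p" "mix B (X n) (Z n) \<in> Lp M p" for n
    using X(1) Z(1) W(1) dL mix_Lp[OF B] by blast+
  have mL: "mix B \<xi> \<zeta> \<in> Lp M p" using mix_Lp[OF B \<xi>L \<zeta>L] .
  have "conv_p M p (\<lambda>n. mix B (X n) (Z n)) (mix B \<xi> \<zeta>)"
    using conv_p_mix[OF B XL(1,2) \<xi>L \<zeta>L X(2) Z(2)] .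
  then have "conv_p M p W (mix B \<xi> \<zeta>)"
    using conv_p_cong_AE[of "\<lambda>n. mix B (X n) (Z n)" W, OF Lp_borel_measurable[OF XL(4)] Lp_borel_measurable[OF XL(3)] _
        Lp_borel_measurable[OF mL] Lp_borel_measurable[OF mL]] W(2)
    by simp
  then show "mix B \<xi> \<zeta> \<in> clp M p (dec M A)" using W(1) mL by (auto simp: clp_def)
qed

lemma clp_clp:
  fixes S :: "('w \<Rightarrow> 'e::{banach,second_countable_topology}) set"
  assumes S: "S \<subseteq> Lp M p"
  shows "clp M p (clp M p S) = clp M p S"
proof
  show "clp M p (clp M p S) \<subseteq> clp M p S"
    using clp_limit[OF S] by (auto simp: clp_def)
  show "clp M p S \<subseteq> clp M p (clp M p S)" using clp_superset[OF clp_subset_Lp] .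
qed

primrec patch :: "(nat \<Rightarrow> 'w \<Rightarrow> 'e::real_vector) \<Rightarrow> (nat \<Rightarrow> 'w set) \<Rightarrow> nat \<Rightarrow> 'w \<Rightarrow> 'e" where
  "patch \<phi> C 0 = \<phi> 0"
| "patch \<phi> C (Suc N) = mix (C N) (\<phi> N) (patch \<phi> C N)"

lemma patch_mem:
  assumes "mix_closed D" "\<And>j. \<phi> j \<in> D" "\<And>j. C j \<in> sets M"
  shows "patch \<phi> C N \<in> D"
  using assms by (induction N) (auto simp: mix_closed_def)

lemma patch_apply:
  assumes "\<omega> \<in> space M"
  shows "(\<exists>j<N. \<omega> \<in> C j \<and> patch \<phi> C N \<omega> = \<phi> j \<omega>) \<or> ((\<forall>j<N. \<omega> \<notin> C j) \<and> patch \<phi> C N \<omega> = \<phi> 0 \<omega>)"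
  using assms by (induction N) (auto simp: mix_apply less_Suc_eq)

lemma decomposable_iff_mix:
  "decomposable M A \<longleftrightarrow> (\<forall>\<xi>\<in>A. \<forall>\<zeta>\<in>A. \<forall>B\<in>sets M. ae_mem M (mix B \<xi> \<zeta>) A)"
  by (simp add: decomposable_def mix_def)

lemma decomposable_patch_AE_mem:
  assumes dA: "decomposable M A" and \<phi>: "\<forall>j<N. \<phi> j \<in> A \<and> C j \<in> sets M" "\<phi> 0 \<in> A"
  shows "ae_mem M (patch \<phi> C N) A"
  using \<phi>
proof (induction N)
  case 0
  then show ?case by (auto simp: ae_mem_def ae_eq_def)
next
  case (Suc N)
  then obtain b where b: "b \<in> A" "ae_eq M (patch \<phi> C N) b" by (auto simp: ae_mem_def)
  then have "ae_mem M (mix (C N) (\<phi> N) b) A"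
    using dA Suc.prems unfolding decomposable_iff_mix by auto
  moreover have "ae_eq M (patch \<phi> C (Suc N)) (mix (C N) (\<phi> N) b)"
    using b(2) AE_space unfolding ae_eq_def by eventually_elim (simp add: mix_apply)
  ultimately show ?case by (rule ae_mem_cong[rotated])
qed

lemma sum_indicator_eq_patch:
  assumes "disjoint_family_on B {..<m}" "(\<Union>i<m. B i) = space M" "\<omega> \<in> space M"
  shows "(\<Sum>i<m. indicator (B i) \<omega> *\<^sub>R \<xi> i \<omega>) = patch \<xi> B m \<omega>"
proof -
  obtain j where "j < m" "\<omega> \<in> B j" "patch \<xi> B m \<omega> = \<xi> j \<omega>"
    using patch_apply[OF assms(3), of m B \<xi>] assms(2,3) by blast
  then show ?thesis using sum_indicator_disjoint_family[OF _ assms(1), of j \<omega> "\<lambda>i. \<xi> i \<omega>"] by simp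
qed

lemma decomposable_dec_AE_mem:
  assumes dA: "decomposable M A" and \<eta>: "\<eta> \<in> dec M A"
  shows "ae_mem M \<eta> A"
proof -
  obtain m :: nat and \<xi> B where h: "\<forall>i<m. \<xi> i \<in> A \<and> B i \<in> sets M" "disjoint_family_on B {..<m}"
      "(\<Union>i<m. B i) = space M" "\<eta> = (\<lambda>\<omega>. \<Sum>i<m. indicator (B i) \<omega> *\<^sub>R \<xi> i \<omega>)"
    using \<eta> unfolding dec_def by blast
  have "0 < m" using h(3) not_empty by (cases m) auto
  then have "ae_mem M (patch \<xi> B m) A" using decomposable_patch_AE_mem[OF dA] h(1) by simp
  moreover have "ae_eq M \<eta> (patch \<xi> B m)"
    unfolding ae_eq_def h(4) by (intro AE_I2) (rule sum_indicator_eq_patch[OF h(2,3)])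
  ultimately show ?thesis by (rule ae_mem_cong[rotated])
qed

section \<open>Closed decomposable sets as selection sets\<close>

definition trunc_dist :: "'e::metric_space \<Rightarrow> ('w \<Rightarrow> 'e) \<Rightarrow> 'w \<Rightarrow> real" where
  "trunc_dist c \<xi> \<omega> = min 1 (dist (\<xi> \<omega>) c)"

lemma trunc_dist_measurable[measurable]:
  fixes \<xi> :: "'w \<Rightarrow> 'e::{banach,second_countable_topology}"
  assumes [measurable]: "\<xi> \<in> borel_measurable M"
  shows "trunc_dist c \<xi> \<in> borel_measurable M"
  unfolding trunc_dist_def by measurable

lemma integrable_trunc_dist:
  fixes \<xi> :: "'w \<Rightarrow> 'e::{banach,second_countable_topology}"
  assumes "\<xi> \<in> borel_measurable M"
  shows "integrable M (trunc_dist c \<xi>)"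
  using assms by (intro integrable_const_bound[of _ 1]) (auto simp: trunc_dist_def)

lemma trunc_dist_mix:
  "\<omega> \<in> space M \<Longrightarrow> trunc_dist c (mix S f g) \<omega> = (if \<omega> \<in> S then trunc_dist c f \<omega> else trunc_dist c g \<omega>)"
  by (simp add: trunc_dist_def mix_apply)

text \<open>Patching \<psi> n with \<xi> on the set S where \<xi> beats every \<psi> n by \<epsilon> lowers the
  expectation by \<epsilon> P(S), so minimality forces P(S) = 0.\<close>

lemma minimizing_sequence_AE_below:
  fixes D :: "('w \<Rightarrow> 'e::{banach,second_countable_topology}) set"
  assumes D: "mix_closed D" "D \<subseteq> borel_measurable M"
    and \<psi>: "\<And>n. \<psi> n \<in> D"
    and lower: "\<And>\<zeta>. \<zeta> \<in> D \<Longrightarrow> a \<le> (\<integral>\<omega>. trunc_dist c \<zeta> \<omega> \<partial>M)"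
    and lim: "(\<lambda>n. \<integral>\<omega>. trunc_dist c (\<psi> n) \<omega> \<partial>M) \<longlonglongrightarrow> a"
    and \<xi>: "\<xi> \<in> D" and \<epsilon>: "\<epsilon> > 0"
  shows "AE \<omega> in M. \<exists>n. trunc_dist c (\<psi> n) \<omega> < trunc_dist c \<xi> \<omega> + \<epsilon>"
proof -
  note [measurable] = \<psi>[THEN subsetD[OF D(2)]] \<xi>[THEN subsetD[OF D(2)]]
  define S where "S = {\<omega>\<in>space M. \<forall>n. trunc_dist c \<xi> \<omega> + \<epsilon> \<le> trunc_dist c (\<psi> n) \<omega>}"
  have [measurable]: "S \<in> sets M" unfolding S_def by measurable
  have S_int: "integrable M (indicator S :: 'w \<Rightarrow> real)"
    by (intro integrable_real_indicator) (auto simp: emeasure_eq_measure)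
  have "a + \<epsilon> * measure M S \<le> (\<integral>\<omega>. trunc_dist c (\<psi> n) \<omega> \<partial>M)" for n
  proof -
    have "mix S \<xi> (\<psi> n) \<in> D" using D(1) \<xi> \<psi> unfolding mix_closed_def by auto
    then have "a \<le> (\<integral>\<omega>. trunc_dist c (mix S \<xi> (\<psi> n)) \<omega> \<partial>M)" by (rule lower)
    also have "\<dots> \<le> (\<integral>\<omega>. trunc_dist c (\<psi> n) \<omega> - \<epsilon> * indicator S \<omega> \<partial>M)"
    proof (rule integral_mono)
      show "integrable M (\<lambda>\<omega>. trunc_dist c (\<psi> n) \<omega> - \<epsilon> * indicator S \<omega>)"
        using S_int by (intro Bochner_Integration.integrable_diff integrable_mult_right integrable_trunc_dist) auto
      show "trunc_dist c (mix S \<xi> (\<psi> n)) \<omega> \<le> trunc_dist c (\<psi> n) \<omega> - \<epsilon> * indicator S \<omega>"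
        if "\<omega> \<in> space M" for \<omega>
        using that by (cases "\<omega> \<in> S") (auto simp: trunc_dist_mix S_def algebra_simps)
    qed (simp add: integrable_trunc_dist)
    also have "\<dots> = (\<integral>\<omega>. trunc_dist c (\<psi> n) \<omega> \<partial>M) - \<epsilon> * measure M S"
      using integrable_trunc_dist[of "\<psi> n" c] S_int by simp
    finally show ?thesis by simp
  qed
  then have "a + \<epsilon> * measure M S \<le> a" by (intro LIMSEQ_le_const[OF lim]) blast
  then have "measure M S = 0" using \<epsilon> measure_nonneg[of M S] by (simp add: mult_le_0_iff)
  moreover have "{\<omega>\<in>space M. \<not> (\<exists>n. trunc_dist c (\<psi> n) \<omega> < trunc_dist c \<xi> \<omega> + \<epsilon>)} = S"
    unfolding S_def by (simp add: not_less)
  ultimately show ?thesis by (simp add: AE_iff_measurable[of S] emeasure_eq_measure)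
qed

lemma integral_indicator_tendsto_zero:
  fixes w :: "'w \<Rightarrow> real"
  assumes w: "integrable M w" and R: "\<And>N. R N \<in> sets M"
    and ev: "AE \<omega> in M. eventually (\<lambda>N. \<omega> \<notin> R N) sequentially"
  shows "(\<lambda>N. \<integral>\<omega>. indicator (R N) \<omega> * w \<omega> \<partial>M) \<longlonglongrightarrow> 0"
proof -
  have "(\<lambda>N. \<integral>\<omega>. indicator (R N) \<omega> * w \<omega> \<partial>M) \<longlonglongrightarrow> (\<integral>\<omega>. 0 \<partial>M)"
  proof (rule integral_dominated_convergence[OF _ _ integrable_norm[OF w]])
    show "AE \<omega> in M. (\<lambda>N. indicator (R N) \<omega> * w \<omega>) \<longlonglongrightarrow> 0"
      using ev by eventually_elim (auto intro: tendsto_eventually elim!: eventually_mono)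
    show "AE \<omega> in M. norm (indicator (R N) \<omega> * w \<omega>) \<le> norm (w \<omega>)" for N
      by (intro AE_I2) (simp add: indicator_def)
  qed (use w R in auto)
  then show ?thesis by simp
qed

lemma integral_powr_diff_le:
  fixes \<theta> \<rho> \<eta> :: "'w \<Rightarrow> 'e::{banach,second_countable_topology}"
  assumes L: "\<theta> \<in> Lp M p" "\<rho> \<in> Lp M p" "\<eta> \<in> Lp M p" and p: "p > 0" and R: "R \<in> sets M"
    and outside: "\<And>\<omega>. \<omega> \<in> space M - R \<Longrightarrow> dist (\<theta> \<omega>) (\<eta> \<omega>) < \<epsilon>"
    and inside: "\<And>\<omega>. \<omega> \<in> R \<Longrightarrow> \<theta> \<omega> = \<rho> \<omega>"
  shows "(\<integral>\<omega>. norm (\<theta> \<omega> - \<eta> \<omega>) powr p \<partial>M)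
    \<le> \<epsilon> powr p + (\<integral>\<omega>. indicator R \<omega> * norm (\<rho> \<omega> - \<eta> \<omega>) powr p \<partial>M)"
proof -
  have int: "integrable M (\<lambda>\<omega>. indicator R \<omega> * norm (\<rho> \<omega> - \<eta> \<omega>) powr p)"
    using integrable_real_mult_indicator[OF R Lp_diff_integrable[OF L(2,3) p]] by (simp add: mult.commute)
  have "(\<integral>\<omega>. norm (\<theta> \<omega> - \<eta> \<omega>) powr p \<partial>M)
      \<le> (\<integral>\<omega>. \<epsilon> powr p + indicator R \<omega> * norm (\<rho> \<omega> - \<eta> \<omega>) powr p \<partial>M)"
  proof (rule integral_mono)
    show "norm (\<theta> \<omega> - \<eta> \<omega>) powr p \<le> \<epsilon> powr p + indicator R \<omega> * norm (\<rho> \<omega> - \<eta> \<omega>) powr p"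
      if "\<omega> \<in> space M" for \<omega>
    proof (cases "\<omega> \<in> R")
      case False
      then have "norm (\<theta> \<omega> - \<eta> \<omega>) powr p \<le> \<epsilon> powr p"
        using that outside p by (intro powr_mono2) (auto simp: dist_norm less_imp_le)
      then show ?thesis using False by simp
    qed (simp add: inside)
  qed (use Lp_diff_integrable[OF L(1,3) p] int in auto)
  also have "\<dots> = \<epsilon> powr p + (\<integral>\<omega>. indicator R \<omega> * norm (\<rho> \<omega> - \<eta> \<omega>) powr p \<partial>M)"
    using int by (simp add: prob_space)
  finally show ?thesis .
qed

lemma ex_near_of_close_off_shrinking:
  fixes \<theta> :: "nat \<Rightarrow> 'w \<Rightarrow> 'e::{banach,second_countable_topology}" and \<rho> \<eta> :: "'w \<Rightarrow> 'e"
  assumes L: "\<And>N. \<theta> N \<in> Lp M p" "\<rho> \<in> Lp M p" "\<eta> \<in> Lp M p" and R: "\<And>N. R N \<in> sets M"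
    and shrink: "AE \<omega> in M. eventually (\<lambda>N. \<omega> \<notin> R N) sequentially"
    and outside: "\<And>N \<omega>. \<omega> \<in> space M - R N \<Longrightarrow>
      dist (\<theta> N \<omega>) (\<eta> \<omega>) < (if p = 0 then \<delta> else (\<delta>/2) powr (1/p))"
    and inside: "\<And>N \<omega>. \<omega> \<in> R N \<Longrightarrow> \<theta> N \<omega> = \<rho> \<omega>" and \<delta>: "\<delta> > 0"
  shows "\<exists>N. near (\<theta> N) \<eta> \<delta>"
proof (cases "p = 0")
  case True
  note [measurable] = L[THEN Lp_borel_measurable] R
  have "(\<lambda>N. measure M (R N)) \<longlonglongrightarrow> 0"
    using integral_indicator_tendsto_zero[of "\<lambda>_. 1", OF _ R shrink] by simp
  from order_tendstoD(2)[OF this \<delta>] obtain N where N: "measure M (R N) < \<delta>"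
    by (auto simp: eventually_sequentially)
  have "measure M {\<omega>\<in>space M. norm (\<theta> N \<omega> - \<eta> \<omega>) > \<delta>} \<le> measure M (R N)"
    using outside True by (intro finite_measure_mono) (force simp: dist_norm)+
  then have "near (\<theta> N) \<eta> \<delta>" using N unfolding near_def using True by simp
  then show ?thesis by blast
next
  case False
  then have p: "p > 0" using exponent by auto
  have "(\<lambda>N. \<integral>\<omega>. indicator (R N) \<omega> * norm (\<rho> \<omega> - \<eta> \<omega>) powr p \<partial>M) \<longlonglongrightarrow> 0"
    by (rule integral_indicator_tendsto_zero[OF Lp_diff_integrable[OF L(2,3) p] R shrink])
  from order_tendstoD(2)[OF this half_gt_zero[OF \<delta>]] obtain N
    where N: "(\<integral>\<omega>. indicator (R N) \<omega> * norm (\<rho> \<omega> - \<eta> \<omega>) powr p \<partial>M) < \<delta>/2"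
    by (auto simp: eventually_sequentially)
  have "((\<delta>/2) powr (1/p)) powr p = \<delta>/2" using p \<delta> by (simp add: powr_powr)
  then have "(\<integral>\<omega>. norm (\<theta> N \<omega> - \<eta> \<omega>) powr p \<partial>M) \<le> \<delta>"
    using integral_powr_diff_le[OF L(1)[of N] L(2,3) p R[of N] outside[of _ N] inside[of _ N]] N False
    by simp
  then show ?thesis using False by (auto simp: near_def)
qed

text \<open>Outside R N some \<phi> j with j < N is \<epsilon>-close to \<eta>, and patching puts such a \<phi> j
  in; by density, R N decreases to a null set.\<close>

lemma ex_near_in_mix_closed:
  fixes D :: "('w \<Rightarrow> 'e::{banach,second_countable_topology}) set" and \<phi> :: "nat \<Rightarrow> 'w \<Rightarrow> 'e"
  assumes D: "mix_closed D" "D \<subseteq> Lp M p" and \<phi>: "\<And>j. \<phi> j \<in> D" and \<eta>: "\<eta> \<in> Lp M p"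
    and dense: "AE \<omega> in M. \<eta> \<omega> \<in> closure (range (\<lambda>j. \<phi> j \<omega>))" and \<delta>: "\<delta> > 0"
  shows "\<exists>\<theta>\<in>D. near \<theta> \<eta> \<delta>"
proof -
  have \<phi>L: "\<phi> j \<in> Lp M p" for j using \<phi> D(2) by blast
  note [measurable] = \<phi>L[THEN Lp_borel_measurable] Lp_borel_measurable[OF \<eta>]
  define \<epsilon> where "\<epsilon> = (if p = 0 then \<delta> else (\<delta>/2) powr (1/p))"
  have \<epsilon>: "\<epsilon> > 0" using \<delta> by (simp add: \<epsilon>_def)
  define C where "C j = {\<omega>\<in>space M. dist (\<phi> j \<omega>) (\<eta> \<omega>) < \<epsilon>}" for j
  define R where "R N = space M - (\<Union>j<N. C j)" for N
  have C[measurable]: "C j \<in> sets M" for j unfolding C_def by measurable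
  have R[measurable]: "R N \<in> sets M" for N unfolding R_def by measurable
  have \<theta>D: "patch \<phi> C N \<in> D" for N using patch_mem[OF D(1) \<phi> C] .
  have shrink: "AE \<omega> in M. eventually (\<lambda>N. \<omega> \<notin> R N) sequentially"
    using dense
  proof eventually_elim
    case (elim \<omega>)
    then obtain j where "dist (\<phi> j \<omega>) (\<eta> \<omega>) < \<epsilon>" using \<epsilon> unfolding closure_approachable by blast
    then have "\<omega> \<notin> R N" if "j < N" for N using that by (auto simp: R_def C_def)
    then show ?case unfolding eventually_sequentially by (metis Suc_le_eq)
  qed
  have "\<exists>N. near (patch \<phi> C N) \<eta> \<delta>"
  proof (rule ex_near_of_close_off_shrinking[OF _ \<phi>L \<eta> R shrink _ _ \<delta>])
    show "patch \<phi> C N \<in> Lp M p" for N using \<theta>D D(2) by blast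
    show "dist (patch \<phi> C N \<omega>) (\<eta> \<omega>) < (if p = 0 then \<delta> else (\<delta>/2) powr (1/p))"
      if "\<omega> \<in> space M - R N" for N \<omega>
      using patch_apply[of \<omega> N C \<phi>] that by (auto simp: R_def C_def \<epsilon>_def)
    show "patch \<phi> C N \<omega> = \<phi> 0 \<omega>" if "\<omega> \<in> R N" for N \<omega>
      using patch_apply[of \<omega> N C \<phi>] that by (auto simp: R_def)
  qed
  then show ?thesis using \<theta>D by blast
qed

lemma Lp_sel_closure_range_subset:
  fixes D :: "('w \<Rightarrow> 'e::{banach,second_countable_topology}) set" and \<phi> :: "nat \<Rightarrow> 'w \<Rightarrow> 'e"
  assumes D: "mix_closed D" "D \<subseteq> Lp M p" "clp M p D \<subseteq> D" and \<phi>: "\<And>j. \<phi> j \<in> D"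
  shows "Lp_sel M p (\<lambda>\<omega>. closure (range (\<lambda>j. \<phi> j \<omega>))) \<subseteq> D"
proof
  fix \<eta> assume "\<eta> \<in> Lp_sel M p (\<lambda>\<omega>. closure (range (\<lambda>j. \<phi> j \<omega>)))"
  then have \<eta>: "\<eta> \<in> Lp M p" and dense: "AE \<omega> in M. \<eta> \<omega> \<in> closure (range (\<lambda>j. \<phi> j \<omega>))"
    by (auto simp: Lp_sel_def)
  have "\<exists>\<theta>\<in>D. near \<theta> \<eta> (1 / (real m + 1))" for m
    by (rule ex_near_in_mix_closed[OF D(1,2) \<phi> \<eta> dense]) simp
  then obtain \<theta> where \<theta>: "\<And>m. \<theta> m \<in> D" "\<And>m. near (\<theta> m) \<eta> (1 / (real m + 1))" by metis
  have \<theta>L: "\<theta> m \<in> Lp M p" for m using \<theta>(1) D(2) by blast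
  have "conv_p M p \<theta> \<eta>"
    using conv_p_of_near[OF Lp_borel_measurable[OF \<theta>L] Lp_borel_measurable[OF \<eta>] \<theta>(2)] .
  then show "\<eta> \<in> D" using \<theta>(1) \<eta> D(3) by (auto simp: clp_def)
qed

lemma mix_closed_AE_mem_closure_minimizers:
  fixes D :: "('w \<Rightarrow> 'e::{banach,second_countable_topology}) set"
    and e :: "nat \<Rightarrow> 'e" and \<psi> :: "nat \<Rightarrow> nat \<Rightarrow> 'w \<Rightarrow> 'e"
  assumes D: "mix_closed D" "D \<subseteq> borel_measurable M"
    and e: "\<forall>x r. r > 0 \<longrightarrow> (\<exists>k. dist x (e k) < r)"
    and \<psi>: "\<And>k n. \<psi> k n \<in> D"
    and lower: "\<And>k \<zeta>. \<zeta> \<in> D \<Longrightarrow> a k \<le> (\<integral>\<omega>. trunc_dist (e k) \<zeta> \<omega> \<partial>M)"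
    and lim: "\<And>k. (\<lambda>n. \<integral>\<omega>. trunc_dist (e k) (\<psi> k n) \<omega> \<partial>M) \<longlonglongrightarrow> a k"
    and \<xi>: "\<xi> \<in> D"
  shows "AE \<omega> in M. \<xi> \<omega> \<in> closure {\<psi> k n \<omega> | k n. True}"
proof -
  have below: "AE \<omega> in M. \<exists>n. trunc_dist (e k) (\<psi> k n) \<omega> < trunc_dist (e k) \<xi> \<omega> + 1 / (real j + 1)"
    for k j by (rule minimizing_sequence_AE_below[OF D \<psi> lower lim \<xi>]) auto
  have "AE \<omega> in M. \<forall>k j. \<exists>n. trunc_dist (e k) (\<psi> k n) \<omega> < trunc_dist (e k) \<xi> \<omega> + 1 / (real j + 1)"
    by (simp add: AE_all_countable below)
  then show ?thesis
  proof eventually_elim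
    case (elim \<omega>)
    then show ?case by (intro closure_by_dense_sequence[OF e]) (fastforce simp: trunc_dist_def)
  qed
qed

text \<open>The Hiai--Umegaki representation: F is the pointwise closure of the values of
  minimizing sequences for the expected truncated distances to a dense sequence.\<close>

lemma ex_closed_random_set_Lp_sel:
  fixes D :: "('w \<Rightarrow> 'e::{banach,second_countable_topology}) set"
  assumes D: "D \<noteq> {}" "mix_closed D" "D \<subseteq> Lp M p" "clp M p D \<subseteq> D"
  shows "\<exists>F. closed_random_set M F \<and> D = Lp_sel M p F"
proof -
  have DM: "D \<subseteq> borel_measurable M" using D(3) Lp_borel_measurable by blast
  obtain e :: "nat \<Rightarrow> 'e" where e: "\<forall>x r. r > 0 \<longrightarrow> (\<exists>k. dist x (e k) < r)"
    using ex_dense_sequence by blast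
  define f where "f k \<zeta> = (\<integral>\<omega>. trunc_dist (e k) \<zeta> \<omega> \<partial>M)" for k \<zeta>
  have bdd: "bdd_below (f k ` D)" for k
    by (intro bdd_belowI[of _ 0]) (auto simp: f_def trunc_dist_def)
  have "\<forall>k. \<exists>x. (\<forall>n. x n \<in> D) \<and> (\<lambda>n. f k (x n)) \<longlonglongrightarrow> Inf (f k ` D)"
    using ex_minimizing_sequence[OF D(1) bdd] by blast
  then obtain \<psi> where \<psi>: "\<And>k n. \<psi> k n \<in> D" "\<And>k. (\<lambda>n. f k (\<psi> k n)) \<longlonglongrightarrow> Inf (f k ` D)"
    by metis
  define \<phi> where "\<phi> j = \<psi> (fst (prod_decode j)) (snd (prod_decode j))" for j
  have \<phi>: "\<phi> j \<in> D" for j using \<psi>(1) by (simp add: \<phi>_def)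
  have range_\<phi>: "range (\<lambda>j. \<phi> j \<omega>) = {\<psi> k n \<omega> | k n. True}" for \<omega>
    unfolding \<phi>_def by (auto intro!: image_eqI[of _ _ "prod_encode (k, n)" for k n])
  define F where "F \<omega> = closure (range (\<lambda>j. \<phi> j \<omega>))" for \<omega>
  have "closed_random_set M F"
    unfolding F_def using \<phi> DM by (intro closed_random_set_closure_range) blast
  moreover have "D \<subseteq> Lp_sel M p F"
  proof
    fix \<xi> assume \<xi>: "\<xi> \<in> D"
    have "AE \<omega> in M. \<xi> \<omega> \<in> F \<omega>"
      unfolding F_def range_\<phi>
      by (rule mix_closed_AE_mem_closure_minimizers[OF D(2) DM e \<psi>(1) _ \<psi>(2)[unfolded f_def] \<xi>])
        (use bdd in \<open>auto simp: f_def intro: cInf_lower\<close>)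
    then show "\<xi> \<in> Lp_sel M p F" using \<xi> D(3) by (auto simp: Lp_sel_def)
  qed
  moreover have "Lp_sel M p F \<subseteq> D"
    unfolding F_def by (rule Lp_sel_closure_range_subset[OF D(2,3,4) \<phi>])
  ultimately show ?thesis by blast
qed

section \<open>Choquet decomposability\<close>

lemma ex_is_FA:
  fixes A :: "('w \<Rightarrow> 'e::{banach,second_countable_topology}) set"
  assumes A: "A \<subseteq> Lp M p" "A \<noteq> {}"
  shows "\<exists>F. is_FA M p A F"
  using ex_closed_random_set_Lp_sel[of "clp M p (dec M A)"] subset_clp_dec[OF A(1)] A(2)
    mix_closed_clp_dec[OF A(1)] clp_subset_Lp clp_clp[OF dec_subset_Lp[OF A(1)]]
  unfolding is_FA_def by blast

lemma choquet_decomposable_iff_clp_dec: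
  fixes A :: "('w \<Rightarrow> 'e::{banach,second_countable_topology}) set"
  assumes A: "A \<subseteq> Lp M p" "A \<noteq> {}"
  shows "choquet_decomposable M p A \<longleftrightarrow> (\<forall>\<xi>\<in>clp M p (dec M A). ae_mem M \<xi> A)"
proof
  assume ch: "choquet_decomposable M p A"
  obtain F where F: "closed_random_set M F" "clp M p (dec M A) = Lp_sel M p F"
    using ex_is_FA[OF A] unfolding is_FA_def by blast
  show "\<forall>\<xi>\<in>clp M p (dec M A). ae_mem M \<xi> A"
  proof
    fix \<xi> assume "\<xi> \<in> clp M p (dec M A)"
    then have \<xi>: "\<xi> \<in> Lp M p" "AE \<omega> in M. \<xi> \<omega> \<in> F \<omega>" using F(2) by (auto simp: Lp_sel_def)
    show "ae_mem M \<xi> A"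
      using ch F return_kernel_in_Kdelta[OF \<xi>(1) F(1) \<xi>(2)] barycenter_return[OF \<xi>(1)]
      unfolding choquet_decomposable_def is_FA_def by blast
  qed
next
  assume sub: "\<forall>\<xi>\<in>clp M p (dec M A). ae_mem M \<xi> A"
  show "choquet_decomposable M p A"
    unfolding choquet_decomposable_def
  proof (intro allI impI ballI)
    fix F K Y assume F: "is_FA M p A F" and K: "K \<in> Kdelta M p F" and Y: "barycenter M p K Y"
    have "Y \<in> Lp_sel M p F"
      using Kdelta_barycenter_AE_mem[OF K Y] F Y by (auto simp: Lp_sel_def barycenter_def is_FA_def)
    then show "ae_mem M Y A" using F sub unfolding is_FA_def by blast
  qed
qed

lemma decomposable_strongly_closed_iff_clp_dec:
  fixes A :: "('w \<Rightarrow> 'e::{banach,second_countable_topology}) set"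
  assumes A: "A \<subseteq> Lp M p"
  shows "decomposable M A \<and> strongly_closed M p A \<longleftrightarrow> (\<forall>\<xi>\<in>clp M p (dec M A). ae_mem M \<xi> A)"
proof
  assume "decomposable M A \<and> strongly_closed M p A"
  then have dA: "decomposable M A" and sc: "strongly_closed M p A" by auto
  show "\<forall>\<xi>\<in>clp M p (dec M A). ae_mem M \<xi> A"
  proof
    fix \<xi> assume "\<xi> \<in> clp M p (dec M A)"
    then obtain X where X: "\<And>n. X n \<in> dec M A" "conv_p M p X \<xi>" and \<xi>: "\<xi> \<in> Lp M p"
      by (auto simp: clp_def)
    obtain Z where Z: "\<And>n. Z n \<in> A" "\<And>n. ae_eq M (X n) (Z n)"
      using decomposable_dec_AE_mem[OF dA X(1)] unfolding ae_mem_def by metis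
    have XL: "X n \<in> Lp M p" and ZL: "Z n \<in> Lp M p" for n
      using X(1) Z(1) dec_subset_Lp[OF A(1)] A(1) by auto
    have "conv_p M p Z \<xi>"
      using conv_p_cong_AE[of X Z \<xi> \<xi>, OF Lp_borel_measurable[OF XL] Lp_borel_measurable[OF ZL] _
          Lp_borel_measurable[OF \<xi>] Lp_borel_measurable[OF \<xi>]] X(2) Z(2)
      by (simp add: ae_eq_def)
    then have "\<xi> \<in> clp M p A" using Z(1) \<xi> by (auto simp: clp_def)
    then show "ae_mem M \<xi> A" using sc unfolding strongly_closed_def by blast
  qed
next
  assume sub: "\<forall>\<xi>\<in>clp M p (dec M A). ae_mem M \<xi> A"
  have "decomposable M A"
    unfolding decomposable_iff_mix
    using mix_closed_clp_dec[OF A(1)] subset_clp_dec[OF A(1)] sub unfolding mix_closed_def by blast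
  moreover have "clp M p A \<subseteq> clp M p (dec M A)"
    using clp_mono[OF subset_clp_dec[OF A(1)]] clp_clp[OF dec_subset_Lp[OF A(1)]] by blast
  then have "strongly_closed M p A"
    using clp_superset[OF A(1)] sub unfolding strongly_closed_def ae_mem_def ae_eq_def by auto
  ultimately show "decomposable M A \<and> strongly_closed M p A" by blast
qed

end

theorem mainTheorem8:
  fixes M :: "'w measure" and p :: real
    and A :: "('w \<Rightarrow> 'e::{banach,second_countable_topology}) set"
  assumes "prob_space M" and "complete_measure M"
    and "p = 0 \<or> p \<ge> 1"
    and "A \<noteq> {}" and "A \<subseteq> Lp M p"
  shows "choquet_decomposable M p A \<longleftrightarrow> decomposable M A \<and> strongly_closed M p A"
proof -
  interpret complete_prob_Lp M p
    using assms(1-3) by (simp add: complete_prob_Lp_def complete_prob_Lp_axioms_def)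
  show ?thesis
    using choquet_decomposable_iff_clp_dec[OF assms(5,4)]
      decomposable_strongly_closed_iff_clp_dec[OF assms(5)] by simp
qed

end
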